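(* Let $U\neq0$, $2\le k<\lfloor L/2\rfloor$, and let $F_k$ be a $k$-local conserved quantity of the one-dimensional Hubbard model. For $\sigma\in\{\uparrow,\downarrow\}$ and $s\in\{+,-\}$, the coefficient in $F_k$ of the $k$-support basis element $c^{s}_{i,\sigma}c^{s}_{i+k-1,\sigma}$ (the basis element starting at site $i$ whose only non-identity factors are $e_{i,\sigma}=c^s_{i,\sigma}$ and $e_{i+k-1,\sigma}=c^{s}_{i+k-1,\sigma}$, with $c^+=c^\dagger$, $c^-=c$) is zero for every $i$.
   Context: Fermionic operators $c_{j,\sigma},c^\dagger_{j,\sigma}$, $j\in\{1,\dots,L\}$ with indices modulo $L$ (periodic boundary conditions), $\sigma\in\{\uparrow,\downarrow\}$, with canonical anticommutation relations; $n_{j,\sigma}=c^\dagger_{j,\sigma}c_{j,\sigma}$, $z_{j,\sigma}=2n_{j,\sigma}-1$. Hubbard Hamiltonian: $H=-2\sum_j\sum_\sigma(c^\dagger_{j,\sigma}c_{j+1,\sigma}+c^\dagger_{j+1,\sigma}c_{j,\sigma})+4U\sum_j(n_{j,\uparrow}-\tfrac12)(n_{j,\downarrow}-\tfrac12)$. An $l$-support basis element starting at site $i$ is $(e_{i,\uparrow}\cdots e_{i+l-1,\uparrow})(e_{i,\downarrow}\cdots e_{i+l-1,\downarrow})$ with $e_{j,\sigma}\in\{c_{j,\sigma},c^\dagger_{j,\sigma},z_{j,\sigma},I\}$, $(e_{i,\uparrow},e_{i,\downarrow})\neq(I,I)$, $(e_{i+l-1,\uparrow},e_{i+l-1,\downarrow})\neq(I,I)$.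 A $k$-local conserved quantity is $F_k=\sum_{l=1}^k\sum_{i=1}^L\sum_e c_e\,e$ (inner sum over $l$-support basis elements starting at $i$) with $[F_k,H]=0$ and some nonzero coefficient on a $k$-support basis element. *)

theory Defs
  imports Complex_Main
begin

text \<open>Fermionic Fock space of the Hubbard chain with L sites (0-indexed, 0..L-1),
  spin encoded as bool (True = up, False = down).
  Basis states of the Fock space are sets of occupied modes; an operator is
  represented by its matrix in this occupation-number basis.  The fermionic
  operators are built via a Jordan-Wigner construction with respect to a fixed
  ordering of the modes, so they satisfy the canonical anticommutation relations.\<close>

type_synonym mode = "nat \<times> bool"
type_synonym fop = "mode set \<Rightarrow> mode set \<Rightarrow> complex"

definition modes :: "nat \<Rightarrow> mode set" where
  "modes L = {0..<L} \<times> UNIV"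

definition configs :: "nat \<Rightarrow> mode set set" where
  "configs L = Pow (modes L)"

definition mode_rank :: "mode \<Rightarrow> nat" where
  "mode_rank m = 2 * fst m + (if snd m then 0 else 1)"

definition jw_sign :: "mode set \<Rightarrow> mode \<Rightarrow> complex" where
  "jw_sign S m = (-1) ^ card {m' \<in> S. mode_rank m' < mode_rank m}"

definition op_mul :: "nat \<Rightarrow> fop \<Rightarrow> fop \<Rightarrow> fop" where
  "op_mul L A B = (\<lambda>S' S. \<Sum>T\<in>configs L. A S' T * B T S)"

definition op_add :: "fop \<Rightarrow> fop \<Rightarrow> fop" where
  "op_add A B = (\<lambda>S' S. A S' S + B S' S)"

definition op_smult :: "complex \<Rightarrow> fop \<Rightarrow> fop" where
  "op_smult a A = (\<lambda>S' S. a * A S' S)"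

definition op_id :: fop where
  "op_id = (\<lambda>S' S. if S' = S then 1 else 0)"

definition ann :: "nat \<Rightarrow> nat \<Rightarrow> bool \<Rightarrow> fop" where
  "ann L j \<sigma> = (let m = (j mod L, \<sigma>) in
     (\<lambda>S' S. if m \<in> S \<and> S' = S - {m} then jw_sign S m else 0))"

text \<open>Creation operator (adjoint of ann; the matrix is real).\<close>
definition cre :: "nat \<Rightarrow> nat \<Rightarrow> bool \<Rightarrow> fop" where
  "cre L j \<sigma> = (\<lambda>S' S. ann L j \<sigma> S S')"

definition num :: "nat \<Rightarrow> nat \<Rightarrow> bool \<Rightarrow> fop" where
  "num L j \<sigma> = op_mul L (cre L j \<sigma>) (ann L j \<sigma>)"

definition zop :: "nat \<Rightarrow> nat \<Rightarrow> bool \<Rightarrow> fop" where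
  "zop L j \<sigma> = op_add (op_smult 2 (num L j \<sigma>)) (op_smult (-1) op_id)"

definition op_eq :: "nat \<Rightarrow> fop \<Rightarrow> fop \<Rightarrow> bool" where
  "op_eq L A B \<longleftrightarrow> (\<forall>S'\<in>configs L. \<forall>S\<in>configs L. A S' S = B S' S)"

definition commutes :: "nat \<Rightarrow> fop \<Rightarrow> fop \<Rightarrow> bool" where
  "commutes L A B \<longleftrightarrow> op_eq L (op_mul L A B) (op_mul L B A)"

definition hubbard :: "nat \<Rightarrow> real \<Rightarrow> fop" where
  "hubbard L U = (\<lambda>S' S.
     (\<Sum>j<L. \<Sum>\<sigma>\<in>(UNIV::bool set).
        -2 * (op_mul L (cre L j \<sigma>) (ann L (j+1) \<sigma>) S' S
              + op_mul L (cre L (j+1) \<sigma>) (ann L j \<sigma>) S' S))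
   + (\<Sum>j<L. 4 * complex_of_real U *
        op_mul L (op_add (num L j True) (op_smult (-1/2) op_id))
                 (op_add (num L j False) (op_smult (-1/2) op_id)) S' S))"

datatype letter = LC | LCd | LZ | LI

definition letter_op :: "nat \<Rightarrow> letter \<Rightarrow> nat \<Rightarrow> bool \<Rightarrow> fop" where
  "letter_op L e j \<sigma> = (case e of LC \<Rightarrow> ann L j \<sigma> | LCd \<Rightarrow> cre L j \<sigma>
                                | LZ \<Rightarrow> zop L j \<sigma> | LI \<Rightarrow> op_id)"

definition op_prod :: "nat \<Rightarrow> fop list \<Rightarrow> fop" where
  "op_prod L xs = foldr (op_mul L) xs op_id"

text \<open>A word f describes the l-support element starting at site i:
  f p sigma is the letter e_{i+p,sigma}, for 0 <= p < l; f is I outside [0,l).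
  Basis element = (e_{i,up} ... e_{i+l-1,up}) (e_{i,down} ... e_{i+l-1,down}).\<close>
definition basis_elem :: "nat \<Rightarrow> nat \<Rightarrow> nat \<Rightarrow> (nat \<Rightarrow> bool \<Rightarrow> letter) \<Rightarrow> fop" where
  "basis_elem L l i f = op_prod L
      (map (\<lambda>p. letter_op L (f p True) (i + p) True) [0..<l]
       @ map (\<lambda>p. letter_op L (f p False) (i + p) False) [0..<l])"

definition basis_words :: "nat \<Rightarrow> (nat \<Rightarrow> bool \<Rightarrow> letter) set" where
  "basis_words l = {f. (\<forall>p \<sigma>. l \<le> p \<longrightarrow> f p \<sigma> = LI)
                       \<and> (f 0 True, f 0 False) \<noteq> (LI, LI)
                       \<and> (f (l - 1) True, f (l - 1) False) \<noteq> (LI, LI)}"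

definition local_op :: "nat \<Rightarrow> nat \<Rightarrow> (nat \<Rightarrow> nat \<Rightarrow> (nat \<Rightarrow> bool \<Rightarrow> letter) \<Rightarrow> complex) \<Rightarrow> fop" where
  "local_op L k coef = (\<lambda>S' S.
     \<Sum>l\<in>{1..k}. \<Sum>i<L. \<Sum>f\<in>basis_words l. coef l i f * basis_elem L l i f S' S)"

definition is_k_local_conserved :: "nat \<Rightarrow> real \<Rightarrow> nat \<Rightarrow> (nat \<Rightarrow> nat \<Rightarrow> (nat \<Rightarrow> bool \<Rightarrow> letter) \<Rightarrow> complex) \<Rightarrow> bool" where
  "is_k_local_conserved L U k coef \<longleftrightarrow>
     commutes L (local_op L k coef) (hubbard L U)
     \<and> (\<exists>i<L. \<exists>f\<in>basis_words k. coef k i f \<noteq> 0)"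

text \<open>The word of c^s_{i,sigma} c^s_{i+k-1,sigma}; s = True means c^dag.\<close>
definition end_word :: "nat \<Rightarrow> bool \<Rightarrow> bool \<Rightarrow> nat \<Rightarrow> bool \<Rightarrow> letter" where
  "end_word k \<sigma> s = (\<lambda>p \<tau>. if \<tau> = \<sigma> \<and> (p = 0 \<or> p = k - 1)
                              then (if s then LCd else LC) else LI)"

end

theory Submission
  imports Defs
begin

text \<open>
  Write \<open>G\<close> for \<open>F\<^sub>k\<close> (case \<open>c c\<close>) or its transpose (case \<open>c\<^sup>\<dagger> c\<^sup>\<dagger>\<close>), so that the coefficient of the end
  word is read off from the amplitudes \<open>G X (X \<union> {a, a + k - 1})\<close> of a spin-\<open>\<sigma>\<close> pair at distance
  \<open>k - 1\<close> on top of a configuration \<open>X\<close>.  Since \<open>F\<^sub>k\<close> is a sum of words on windows of length \<open>k\<close>, only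
  the words that agree with the end word up to \<open>z\<close> letters contribute to these amplitudes, each
  weighted by the \<open>z\<close>-eigenvalues of \<open>X\<close> at its \<open>z\<close> letters.

  The matrix element of \<open>[G, H] = 0\<close> between \<open>P\<close> and \<open>P \<union> {a, a + k}\<close> involves, by locality, only
  two hopping terms on each side.  Hence the amplitude of the pair \<open>(a, a + k - 1)\<close> on \<open>X\<close> vanishes
  iff that of the pair \<open>(a + 1, a + k)\<close> does, on \<open>X\<close> with its particle at \<open>a + 1\<close> (if any) moved to
  \<open>a\<close>.  Repeating this \<open>k\<close> times moves the pair out of the window of \<open>X\<close>, so every amplitude vanishes
  once the vacuum amplitudes \<open>\<phi>(a, a + k - 1) = \<plusminus>G \<emptyset> {a, a + k - 1}\<close> do.  For these, the same identity gives
  \<open>\<phi>(a + 1, a + k) = - \<phi>(a, a + k - 1)\<close>, and the matrix element between the vacuum and the pair gives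
  \<open>-4 U \<phi>(a, a + k - 1) = 2 (\<phi>(a + 1, a + k - 1) + \<phi>(a, a + k - 2))\<close>; summing the latter with
  alternating signs around the ring forces \<open>\<phi> = 0\<close> when \<open>U \<noteq> 0\<close>.  Finally, averaging the vanishing
  amplitudes over all \<open>X\<close> kills the \<open>z\<close>-dressings of the other words and isolates the coefficient of
  the end word.
\<close>

section \<open>Matrix elements of words of fermion operators\<close>

fun letter_action :: "letter \<Rightarrow> mode \<Rightarrow> mode set \<Rightarrow> (mode set \<times> complex) option" where
  "letter_action LC m S = (if m \<in> S then Some (S - {m}, jw_sign S m) else None)"
| "letter_action LCd m S = (if m \<notin> S then Some (insert m S, jw_sign S m) else None)"
| "letter_action LZ m S = Some (S, if m \<in> S then 1 else -1)"
| "letter_action LI m S = Some (S, 1)"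

text \<open>As in an operator product, the last letter of a word acts first.\<close>

fun word_action :: "(letter \<times> mode) list \<Rightarrow> mode set \<Rightarrow> (mode set \<times> complex) option" where
  "word_action [] S = Some (S, 1)"
| "word_action ((e, m) # xs) S = (case word_action xs S of None \<Rightarrow> None
     | Some (T, s) \<Rightarrow> (case letter_action e m T of None \<Rightarrow> None | Some (T', s') \<Rightarrow> Some (T', s' * s)))"

definition action_entry :: "(mode set \<times> complex) option \<Rightarrow> mode set \<Rightarrow> complex" where
  "action_entry r S' = (case r of None \<Rightarrow> 0 | Some (T, s) \<Rightarrow> if S' = T then s else 0)"

lemma jw_sign_insert_self: "jw_sign (insert m S) m = jw_sign S m"
proof -
  have "{m' \<in> insert m S. mode_rank m' < mode_rank m} = {m' \<in> S. mode_rank m' < mode_rank m}"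
    by auto
  then show ?thesis unfolding jw_sign_def by simp
qed

lemma jw_sign_square: "jw_sign S m * jw_sign S m = 1"
  unfolding jw_sign_def by (simp add: power_mult_distrib[symmetric])

lemma jw_sign_cases: "jw_sign S m = 1 \<or> jw_sign S m = -1"
  unfolding jw_sign_def by (cases "even (card {m' \<in> S. mode_rank m' < mode_rank m})") auto

lemma finite_configs: "finite (configs L)"
  unfolding configs_def modes_def by simp

lemma op_mul_entry_single:
  assumes "T \<in> configs L" "\<And>R. B R S = (if R = T then s else 0)"
  shows "op_mul L A B S' S = A S' T * s"
proof -
  have "op_mul L A B S' S = (\<Sum>R\<in>configs L. (if R = T then A S' T * s else 0))"
    unfolding op_mul_def by (rule sum.cong) (auto simp: assms(2))
  also have "\<dots> = A S' T * s" using assms(1) finite_configs by simp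
  finally show ?thesis .
qed

lemma op_mul_entry_action:
  assumes "\<And>R. B R S = action_entry r R"
    and "\<And>T s. r = Some (T, s) \<Longrightarrow> T \<in> configs L"
  shows "op_mul L A B S' S = (case r of None \<Rightarrow> 0 | Some (T, s) \<Rightarrow> A S' T * s)"
proof (cases r)
  case None
  then show ?thesis using assms by (simp add: op_mul_def action_entry_def)
next
  case (Some p)
  obtain T s where p: "p = (T, s)" by (cases p)
  have "op_mul L A B S' S = A S' T * s"
    by (rule op_mul_entry_single[of T]) (use assms Some p in \<open>auto simp: action_entry_def\<close>)
  then show ?thesis using Some p by simp
qed

lemma letter_action_configs:
  assumes "S \<in> configs L" "m \<in> modes L" "letter_action e m S = Some (T, s)"
  shows "T \<in> configs L"
  using assms by (cases e) (auto simp: configs_def split: if_splits)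

lemma num_entry:
  assumes "0 < L" "S \<in> configs L"
  shows "num L j \<sigma> S' S = (if S' = S \<and> (j mod L, \<sigma>) \<in> S then 1 else 0)"
proof (cases "(j mod L, \<sigma>) \<in> S")
  case True
  have "num L j \<sigma> S' S = cre L j \<sigma> S' (S - {(j mod L, \<sigma>)}) * jw_sign S (j mod L, \<sigma>)"
    unfolding num_def
    by (rule op_mul_entry_single) (use assms True in \<open>auto simp: ann_def configs_def Let_def\<close>)
  then show ?thesis
    using True by (auto simp: cre_def ann_def Let_def jw_sign_square)
next
  case False
  then show ?thesis by (simp add: num_def op_mul_def ann_def Let_def)
qed

lemma letter_op_entry:
  assumes "0 < L" "S \<in> configs L"
  shows "letter_op L e j \<sigma> S' S = action_entry (letter_action e (j mod L, \<sigma>) S) S'"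
  using num_entry[OF assms]
  by (cases e) (auto simp: letter_op_def ann_def cre_def action_entry_def Let_def
      jw_sign_insert_self zop_def op_add_def op_smult_def op_id_def)

lemma word_action_configs:
  assumes "S \<in> configs L" "snd ` set xs \<subseteq> modes L" "word_action xs S = Some (T, s)"
  shows "T \<in> configs L"
  using assms
proof (induction xs arbitrary: T s)
  case Nil
  then show ?case by simp
next
  case (Cons x xs)
  obtain e m where x: "x = (e, m)" by (cases x)
  from Cons.prems x obtain T0 s0 s' where "word_action xs S = Some (T0, s0)"
    and "letter_action e m T0 = Some (T, s')"
    by (auto split: option.splits)
  with Cons x show ?case by (auto intro: letter_action_configs)
qed

lemma op_prod_entry:
  assumes "0 < L" "S \<in> configs L"
  shows "op_prod L (map (\<lambda>(e, j, \<sigma>). letter_op L e j \<sigma>) ys) S' S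
         = action_entry (word_action (map (\<lambda>(e, j, \<sigma>). (e, (j mod L, \<sigma>))) ys) S) S'"
proof (induction ys arbitrary: S')
  case Nil
  then show ?case by (simp add: op_prod_def op_id_def action_entry_def)
next
  case (Cons y ys)
  obtain e j \<sigma> where y: "y = (e, j, \<sigma>)" by (cases y)
  let ?w = "map (\<lambda>(e, j, \<sigma>). (e, (j mod L, \<sigma>))) ys"
  have in_configs: "T \<in> configs L" if "word_action ?w S = Some (T, s)" for T s
    by (rule word_action_configs[OF assms(2) _ that]) (use assms(1) in \<open>auto simp: modes_def\<close>)
  have "op_prod L (map (\<lambda>(e, j, \<sigma>). letter_op L e j \<sigma>) (y # ys)) S' S
      = op_mul L (letter_op L e j \<sigma>) (op_prod L (map (\<lambda>(e, j, \<sigma>). letter_op L e j \<sigma>) ys)) S' S"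
    by (simp add: op_prod_def y)
  also have "\<dots> = (case word_action ?w S of None \<Rightarrow> 0 | Some (T, s) \<Rightarrow> letter_op L e j \<sigma> S' T * s)"
    by (rule op_mul_entry_action) (use Cons in_configs in auto)
  also have "\<dots> = action_entry (word_action (map (\<lambda>(e, j, \<sigma>). (e, (j mod L, \<sigma>))) (y # ys)) S) S'"
    using letter_op_entry[OF assms(1) in_configs]
    by (auto simp: y action_entry_def split: option.splits)
  finally show ?case .
qed

lemma word_action_untouched:
  assumes "word_action xs S = Some (T, s)" "m \<notin> snd ` set xs"
  shows "m \<in> T \<longleftrightarrow> m \<in> S"
  using assms
proof (induction xs arbitrary: T s)
  case Nil
  then show ?case by simp
next
  case (Cons x xs)
  obtain e m0 where x: "x = (e, m0)" by (cases x)
  from Cons.prems x obtain T0 s0 s' where "word_action xs S = Some (T0, s0)"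
    and "letter_action e m0 T0 = Some (T, s')"
    by (auto split: option.splits)
  with Cons x show ?case by (cases e) (auto split: if_splits)
qed

lemma word_action_sign:
  assumes "word_action xs S = Some (T, s)"
  shows "s = 1 \<or> s = -1"
  using assms
proof (induction xs arbitrary: T s)
  case Nil
  then show ?case by simp
next
  case (Cons x xs)
  obtain e m0 where x: "x = (e, m0)" by (cases x)
  from Cons.prems x obtain T0 s0 s' where "word_action xs S = Some (T0, s0)"
    and l: "letter_action e m0 T0 = Some (T, s')" and "s = s' * s0"
    by (auto split: option.splits)
  moreover have "s' = 1 \<or> s' = -1"
    using l jw_sign_cases[of T0 m0] by (cases e) (auto split: if_splits)
  ultimately show ?case using Cons.IH by fastforce
qed

lemma word_action_letters:
  assumes "distinct (map snd xs)" "word_action xs S = Some (T, s)" "(e, m) \<in> set xs"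
  shows "(e = LC \<longrightarrow> m \<in> S \<and> m \<notin> T) \<and> (e = LCd \<longrightarrow> m \<notin> S \<and> m \<in> T)
         \<and> (e = LZ \<or> e = LI \<longrightarrow> (m \<in> T \<longleftrightarrow> m \<in> S))"
  using assms
proof (induction xs arbitrary: T s)
  case Nil
  then show ?case by simp
next
  case (Cons x xs)
  obtain e0 m0 where x: "x = (e0, m0)" by (cases x)
  from Cons.prems x obtain T0 s0 s' where T0: "word_action xs S = Some (T0, s0)"
    and l: "letter_action e0 m0 T0 = Some (T, s')"
    by (auto split: option.splits)
  have fresh: "m0 \<notin> snd ` set xs" using Cons.prems(1) x by auto
  show ?case
  proof (cases "(e, m) = x")
    case True
    then show ?thesis using l word_action_untouched[OF T0 fresh] x
      by (cases e) (auto split: if_splits)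
  next
    case False
    then have "(e, m) \<in> set xs" using Cons.prems(3) by auto
    moreover from this have "m \<noteq> m0" using fresh by force
    ultimately show ?thesis using Cons.IH[OF _ T0] Cons.prems(1) l
      by (cases e0) (auto split: if_splits)
  qed
qed

lemma word_action_defined:
  assumes "distinct (map snd xs)"
    and "\<forall>(e, m)\<in>set xs. (e = LC \<longrightarrow> m \<in> S) \<and> (e = LCd \<longrightarrow> m \<notin> S)"
  shows "\<exists>s. word_action xs S = Some ((S - {m. (LC, m) \<in> set xs}) \<union> {m. (LCd, m) \<in> set xs}, s)"
  using assms
proof (induction xs)
  case Nil
  then show ?case by simp
next
  case (Cons x xs)
  obtain e m where x: "x = (e, m)" by (cases x)
  let ?T0 = "(S - {m. (LC, m) \<in> set xs}) \<union> {m. (LCd, m) \<in> set xs}"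
  obtain s0 where T0: "word_action xs S = Some (?T0, s0)"
    using Cons by auto
  have fresh: "m \<notin> snd ` set xs" using Cons.prems(1) x by auto
  then have "m \<in> ?T0 \<longleftrightarrow> m \<in> S" by force
  then show ?case using T0 x fresh Cons.prems(2)
    by (cases e) (auto intro!: exI set_eqI simp: image_iff; force)+
qed

definition z_value :: "mode \<Rightarrow> mode set \<Rightarrow> complex" where
  "z_value m S = (if m \<in> S then 1 else -1)"

lemma word_action_I_to_Z:
  assumes "list_all2 (\<lambda>x y. snd y = snd x \<and> (fst y = fst x \<or> (fst x = LI \<and> fst y = LZ))) xs ys"
    and "distinct (map snd xs)" and "\<forall>x\<in>set xs. fst x \<noteq> LZ"
  shows "word_action ys S = map_option (\<lambda>(T, s). (T, s * (\<Prod>m\<in>{m. (LZ, m) \<in> set ys}. z_value m S)))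
           (word_action xs S)"
  using assms
proof (induction xs arbitrary: ys)
  case Nil
  then show ?case by simp
next
  case (Cons x xs)
  from Cons.prems(1) obtain y ys' where ys: "ys = y # ys'"
    and rel: "snd y = snd x \<and> (fst y = fst x \<or> (fst x = LI \<and> fst y = LZ))"
    and rest: "list_all2 (\<lambda>x y. snd y = snd x \<and> (fst y = fst x \<or> (fst x = LI \<and> fst y = LZ))) xs ys'"
    by (cases ys) auto
  obtain e m where x: "x = (e, m)" by (cases x)
  obtain e' where y: "y = (e', m)" using rel x by (cases y) auto
  let ?Z = "{m. (LZ, m) \<in> set ys'}"
  have IH: "word_action ys' S = map_option (\<lambda>(T, s). (T, s * (\<Prod>m\<in>?Z. z_value m S))) (word_action xs S)"
    using Cons.IH[OF rest] Cons.prems by auto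
  have "map snd ys' = map snd xs" using rest
    by (induction rule: list_all2_induct) auto
  moreover have fresh: "m \<notin> snd ` set xs" using Cons.prems(2) x by auto
  ultimately have "m \<notin> ?Z" by (metis (mono_tags, lifting) image_eqI list.set_map mem_Collect_eq snd_conv)
  have "finite ?Z" by (rule finite_subset[of _ "snd ` set ys'"]) force+
  show ?case
  proof (cases "word_action xs S")
    case None
    then show ?thesis using IH ys x y by simp
  next
    case (Some p)
    obtain T s where p: "p = (T, s)" by (cases p)
    have untouched: "m \<in> T \<longleftrightarrow> m \<in> S" using word_action_untouched[OF _ fresh] Some p by simp
    show ?thesis
    proof (cases "e' = e")
      case True
      then have "{m. (LZ, m) \<in> set ys} = ?Z" using ys y Cons.prems(3) x by auto
      then show ?thesis using IH ys y x True Some p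
        by (auto split: option.splits simp: mult.assoc)
    next
      case False
      then have "e = LI" "e' = LZ" using rel x y by auto
      then have "{m'. (LZ, m') \<in> set ys} = insert m ?Z" using ys y by auto
      then have "(\<Prod>m'\<in>{m'. (LZ, m') \<in> set ys}. z_value m' S) = z_value m S * (\<Prod>m\<in>?Z. z_value m S)"
        using \<open>finite ?Z\<close> \<open>m \<notin> ?Z\<close> by simp
      then show ?thesis using IH ys y x \<open>e = LI\<close> \<open>e' = LZ\<close> Some p untouched
        by (auto simp: z_value_def mult_ac)
    qed
  qed
qed

section \<open>Basis elements and locality\<close>

definition basis_word_list :: "nat \<Rightarrow> nat \<Rightarrow> nat \<Rightarrow> (nat \<Rightarrow> bool \<Rightarrow> letter) \<Rightarrow> (letter \<times> mode) list" where
  "basis_word_list L l i f = map (\<lambda>p. (f p True, ((i + p) mod L, True))) [0..<l]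
                           @ map (\<lambda>p. (f p False, ((i + p) mod L, False))) [0..<l]"

definition window :: "nat \<Rightarrow> nat \<Rightarrow> nat \<Rightarrow> mode set" where
  "window L l i = {((i + p) mod L, \<tau>) | p \<tau>. p < l}"

lemma basis_elem_entry:
  assumes "0 < L" "S \<in> configs L"
  shows "basis_elem L l i f S' S = action_entry (word_action (basis_word_list L l i f) S) S'"
proof -
  define ys where "ys = map (\<lambda>p. (f p True, i + p, True)) [0..<l] @ map (\<lambda>p. (f p False, i + p, False)) [0..<l]"
  have "basis_elem L l i f = op_prod L (map (\<lambda>(e, j, \<sigma>). letter_op L e j \<sigma>) ys)"
    unfolding basis_elem_def ys_def by (simp add: o_def)
  moreover have "map (\<lambda>(e, j, \<sigma>). (e, (j mod L, \<sigma>))) ys = basis_word_list L l i f"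
    by (simp add: ys_def basis_word_list_def o_def)
  ultimately show ?thesis using op_prod_entry[OF assms] by simp
qed

lemma set_basis_word_list:
  "(e, m) \<in> set (basis_word_list L l i f) \<longleftrightarrow> (\<exists>p \<tau>. p < l \<and> m = ((i + p) mod L, \<tau>) \<and> e = f p \<tau>)"
  unfolding basis_word_list_def by (cases "snd m") auto

lemma modes_basis_word_list: "snd ` set (basis_word_list L l i f) = window L l i"
proof
  show "snd ` set (basis_word_list L l i f) \<subseteq> window L l i"
    unfolding window_def by (force simp: set_basis_word_list)
next
  show "window L l i \<subseteq> snd ` set (basis_word_list L l i f)"
  proof
    fix m assume "m \<in> window L l i"
    then obtain p \<tau> where "p < l" "m = ((i + p) mod L, \<tau>)" unfolding window_def by auto
    then have "(f p \<tau>, m) \<in> set (basis_word_list L l i f)" using set_basis_word_list by blast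
    then show "m \<in> snd ` set (basis_word_list L l i f)" by force
  qed
qed

lemma window_mono: "l \<le> k \<Longrightarrow> window L l i \<subseteq> window L k i"
  unfolding window_def by fastforce

lemma window_mod: "window L l (i mod L) = window L l i"
  unfolding window_def by (simp add: mod_add_left_eq)

lemma mod_eq_imp_int_dvd_diff:
  assumes "(x::nat) mod L = y mod L"
  shows "int L dvd int x - int y"
  using assms by (metis mod_eq_dvd_iff of_nat_mod)

lemma mod_add_neq:
  fixes x d L :: nat
  assumes "0 < d" "d < L"
  shows "(x + d) mod L \<noteq> x mod L"
proof
  assume "(x + d) mod L = x mod L"
  then have "int L dvd int d" using mod_eq_imp_int_dvd_diff by fastforce
  then show False using assms zdvd_not_zless[of "int d" "int L"] by simp
qed

lemma mod_add_cancel: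
  fixes a p q L :: nat
  assumes "(a + p) mod L = (a + q) mod L" "p < L" "q < L"
  shows "p = q"
proof (rule ccontr)
  assume "p \<noteq> q"
  then consider "p < q" | "q < p" by linarith
  then show False
  proof cases
    case 1
    then have "(a + p + (q - p)) mod L \<noteq> (a + p) mod L" using assms by (intro mod_add_neq) auto
    then show ?thesis using 1 assms(1) by simp
  next
    case 2
    then have "(a + q + (p - q)) mod L \<noteq> (a + q) mod L" using assms by (intro mod_add_neq) auto
    then show ?thesis using 2 assms(1) by simp
  qed
qed

lemma distinct_basis_word_list:
  assumes "l \<le> L"
  shows "distinct (map snd (basis_word_list L l i f))"
proof -
  have "inj_on (\<lambda>p. (i + p) mod L) {0..<l}"
    using assms by (intro inj_onI) (auto dest: mod_add_cancel)
  then show ?thesis unfolding basis_word_list_def by (auto simp: distinct_map inj_on_def)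
qed

lemma window_offsets:
  assumes "((a + d1) mod L, \<sigma>) \<in> window L l i" "((a + d2) mod L, \<sigma>') \<in> window L l i"
  obtains p q where "p < l" "q < l" "int L dvd (int q - int p) - (int d2 - int d1)"
    "(i + p) mod L = (a + d1) mod L"
proof -
  from assms obtain p q where p: "p < l" "(i + p) mod L = (a + d1) mod L"
    and q: "q < l" "(i + q) mod L = (a + d2) mod L"
    unfolding window_def by auto
  have "int L dvd (int (i + q) - int (a + d2)) - (int (i + p) - int (a + d1))"
    using mod_eq_imp_int_dvd_diff[OF p(2)] mod_eq_imp_int_dvd_diff[OF q(2)] by (rule dvd_diff[rotated])
  then have "int L dvd (int q - int p) - (int d2 - int d1)"
    by (simp add: algebra_simps)
  then show ?thesis using that p q by blast
qed

lemma window_far_pair: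
  assumes "k \<le> d" "d + k \<le> L"
    and "(a mod L, \<sigma>) \<in> window L k i" "((a + d) mod L, \<sigma>') \<in> window L k i"
  shows False
proof -
  have "((a + 0) mod L, \<sigma>) \<in> window L k i" using assms(3) by simp
  then obtain p q where pq: "p < k" "q < k" "int L dvd (int q - int p) - (int d - int 0)"
    using window_offsets[OF _ assms(4)] by blast
  define z where "z = int d - (int q - int p)"
  have "int L dvd z" using pq(3) unfolding z_def by (metis diff_zero dvd_minus_iff minus_diff_eq of_nat_0)
  moreover have "0 < z" "z < int L" using pq assms unfolding z_def by linarith+
  ultimately show False using zdvd_not_zless by blast
qed

lemma window_ends:
  assumes "a < L" "i < L" "l \<le> k" "2 * k \<le> L"
    and "(a, \<sigma>) \<in> window L l i" "((a + (k - 1)) mod L, \<sigma>') \<in> window L l i"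
  shows "l = k \<and> i = a"
proof -
  have "((a + 0) mod L, \<sigma>) \<in> window L l i" using assms by simp
  then obtain p q where pq: "p < l" "q < l" "int L dvd (int q - int p) - (int (k - 1) - int 0)"
    "(i + p) mod L = (a + 0) mod L"
    using window_offsets[OF _ assms(6)] by blast
  define z where "z = int (k - 1) - (int q - int p)"
  have "int L dvd z" using pq(3) unfolding z_def by (metis dvd_minus_iff minus_diff_eq diff_zero of_nat_0)
  moreover have "0 \<le> z" "z < int L" using pq assms unfolding z_def by linarith+
  ultimately have "z = 0" using zdvd_not_zless[of z "int L"] by (cases "z = 0") auto
  then have "p = 0" "l = k" using pq assms unfolding z_def by linarith+
  moreover have "i = a" using pq(4) \<open>p = 0\<close> assms(1,2) by simp
  ultimately show ?thesis by simp
qed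

definition k_local :: "nat \<Rightarrow> nat \<Rightarrow> fop \<Rightarrow> bool" where
  "k_local L k G \<longleftrightarrow> (\<forall>S' \<in> configs L. \<forall>S \<in> configs L. G S' S \<noteq> 0
      \<longrightarrow> (\<exists>i. {m. (m \<in> S') \<noteq> (m \<in> S)} \<subseteq> window L k i))"

lemma basis_elem_support:
  assumes "0 < L" "S \<in> configs L" "basis_elem L l i f S' S \<noteq> 0"
  shows "{m. (m \<in> S') \<noteq> (m \<in> S)} \<subseteq> window L l i"
proof -
  obtain s where "word_action (basis_word_list L l i f) S = Some (S', s)"
    using assms basis_elem_entry[OF assms(1,2)]
    by (auto simp: action_entry_def split: option.splits if_splits)
  then show ?thesis using word_action_untouched modes_basis_word_list by blast
qed

lemma k_local_local_op:
  assumes "0 < L"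
  shows "k_local L k (local_op L k coef)"
  unfolding k_local_def
proof (intro ballI impI)
  fix S' S assume S: "S \<in> configs L" and "local_op L k coef S' S \<noteq> 0"
  then obtain l i f where l: "l \<in> {1..k}" and "basis_elem L l i f S' S \<noteq> 0"
    unfolding local_op_def by (metis (no_types, lifting) mult_zero_right sum.neutral)
  then have "{m. (m \<in> S') \<noteq> (m \<in> S)} \<subseteq> window L k i"
    using basis_elem_support[OF assms S] window_mono[of l k L i] by (meson atLeastAtMost_iff subset_trans)
  then show "\<exists>i. {m. (m \<in> S') \<noteq> (m \<in> S)} \<subseteq> window L k i" ..
qed

lemma k_local_transpose:
  assumes "k_local L k G"
  shows "k_local L k (\<lambda>S' S. G S S')"
  unfolding k_local_def
proof (intro ballI impI)
  fix S' S assume "S' \<in> configs L" "S \<in> configs L" "G S S' \<noteq> 0"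
  then obtain i where "{m. (m \<in> S) \<noteq> (m \<in> S')} \<subseteq> window L k i"
    using assms unfolding k_local_def by blast
  moreover have "{m. (m \<in> S) \<noteq> (m \<in> S')} = {m. (m \<in> S') \<noteq> (m \<in> S)}" by auto
  ultimately show "\<exists>i. {m. (m \<in> S') \<noteq> (m \<in> S)} \<subseteq> window L k i" by auto
qed

lemma k_local_far_pair:
  assumes "k_local L k G" "S' \<in> configs L" "S \<in> configs L" "k \<le> d" "d + k \<le> L"
    "((a mod L, \<sigma>) \<in> S') \<noteq> ((a mod L, \<sigma>) \<in> S)"
    "(((a + d) mod L, \<sigma>') \<in> S') \<noteq> (((a + d) mod L, \<sigma>') \<in> S)"
  shows "G S' S = 0"
  using assms window_far_pair[OF assms(4,5)] unfolding k_local_def by blast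

section \<open>Matrix elements of the Hubbard Hamiltonian\<close>

definition hopping :: "nat \<Rightarrow> nat \<Rightarrow> nat \<Rightarrow> bool \<Rightarrow> fop" where
  "hopping L x y \<sigma> = op_mul L (cre L x \<sigma>) (ann L y \<sigma>)"

definition interaction :: "nat \<Rightarrow> nat \<Rightarrow> fop" where
  "interaction L j = op_mul L (op_add (num L j True) (op_smult (-1/2) op_id))
                             (op_add (num L j False) (op_smult (-1/2) op_id))"

lemma hubbard_split:
  "hubbard L U S' S =
     (\<Sum>j<L. \<Sum>\<sigma>\<in>UNIV. -2 * (hopping L j (j + 1) \<sigma> S' S + hopping L (j + 1) j \<sigma> S' S))
   + (\<Sum>j<L. 4 * complex_of_real U * interaction L j S' S)"
  unfolding hubbard_def hopping_def interaction_def by simp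

lemma interaction_entry:
  assumes "0 < L" "S \<in> configs L"
  shows "interaction L j S' S = (if S' = S then (of_bool ((j mod L, True) \<in> S) - 1/2)
                                              * (of_bool ((j mod L, False) \<in> S) - 1/2) else 0)"
proof -
  have "interaction L j S' S = op_add (num L j True) (op_smult (-1/2) op_id) S' S
                               * (of_bool ((j mod L, False) \<in> S) - 1/2)"
    unfolding interaction_def
    by (rule op_mul_entry_single[OF assms(2)])
       (auto simp: op_add_def op_smult_def op_id_def num_entry[OF assms])
  then show ?thesis by (auto simp: op_add_def op_smult_def op_id_def num_entry[OF assms])
qed

lemma hopping_entry:
  assumes "0 < L" "S \<in> configs L" "x mod L \<noteq> y mod L"
  shows "hopping L x y \<sigma> T S =
    (if (y mod L, \<sigma>) \<in> S \<and> (x mod L, \<sigma>) \<notin> S \<and> T = insert (x mod L, \<sigma>) (S - {(y mod L, \<sigma>)})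
     then jw_sign (S - {(y mod L, \<sigma>)}) (x mod L, \<sigma>) * jw_sign S (y mod L, \<sigma>) else 0)"
proof -
  let ?y = "(y mod L, \<sigma>)"
  have "hopping L x y \<sigma> T S
      = (case letter_action LC ?y S of None \<Rightarrow> 0 | Some (T', s) \<Rightarrow> cre L x \<sigma> T T' * s)"
    unfolding hopping_def
  proof (rule op_mul_entry_action)
    show "ann L y \<sigma> R S = action_entry (letter_action LC ?y S) R" for R
      using letter_op_entry[OF assms(1,2), of LC] by (simp add: letter_op_def)
    show "T' \<in> configs L" if "letter_action LC ?y S = Some (T', s)" for T' s
      using that assms(2) by (auto simp: configs_def split: if_splits)
  qed
  moreover have "S - {?y} \<in> configs L" using assms(2) by (auto simp: configs_def)
  ultimately show ?thesis
    using letter_op_entry[OF assms(1), of "S - {?y}" LCd x \<sigma> T] assms(3)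
    by (auto simp: letter_op_def action_entry_def)
qed

definition adjacent_modes :: "nat \<Rightarrow> mode \<Rightarrow> mode \<Rightarrow> bool" where
  "adjacent_modes L m m' \<longleftrightarrow> snd m = snd m' \<and> fst m < L \<and> fst m' < L
       \<and> (fst m' = (fst m + 1) mod L \<or> fst m = (fst m' + 1) mod L)"

definition hops :: "nat \<Rightarrow> mode set \<Rightarrow> mode set set" where
  "hops L S = {insert m' (S - {m}) | m m'. m \<in> S \<and> m' \<notin> S \<and> adjacent_modes L m m'}"

lemma adjacent_modes_sym: "adjacent_modes L m m' \<longleftrightarrow> adjacent_modes L m' m"
  unfolding adjacent_modes_def by auto

lemma adjacent_modes_succ: "0 < L \<Longrightarrow> adjacent_modes L (x mod L, \<sigma>) ((x + 1) mod L, \<sigma>)"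
  unfolding adjacent_modes_def by (simp add: mod_Suc_eq)

lemma adjacent_modes_cases:
  assumes "0 < L" "adjacent_modes L (x mod L, \<sigma>) m'"
  shows "m' = ((x + 1) mod L, \<sigma>) \<or> m' = ((x + (L - 1)) mod L, \<sigma>)"
proof -
  obtain y where m': "m' = (y, \<sigma>)" "y < L"
    using assms unfolding adjacent_modes_def by (cases m') auto
  have "y = (x + 1) mod L \<or> x mod L = (y + 1) mod L"
    using assms m' unfolding adjacent_modes_def by (auto simp: mod_Suc_eq)
  moreover have "(x + (L - 1)) mod L = y" if "x mod L = (y + 1) mod L"
  proof -
    have "(x + (L - 1)) mod L = ((y + 1) mod L + (L - 1)) mod L"
      using that by (metis mod_add_left_eq)
    also have "\<dots> = (y + 1 + (L - 1)) mod L" by (simp add: mod_add_left_eq)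
    also have "\<dots> = (y + L) mod L" using assms(1) by simp
    finally show ?thesis using m'(2) by simp
  qed
  ultimately show ?thesis using m' by auto
qed

lemma hops_configs: "S \<in> configs L \<Longrightarrow> hops L S \<subseteq> configs L"
  unfolding hops_def configs_def modes_def adjacent_modes_def by (auto simp: mem_Times_iff)

lemma finite_hops: "S \<in> configs L \<Longrightarrow> finite (hops L S)"
  using hops_configs finite_configs finite_subset by blast

lemma not_in_hops: "S \<notin> hops L S"
  unfolding hops_def by auto

lemma hopsI: "m \<in> S \<Longrightarrow> m' \<notin> S \<Longrightarrow> adjacent_modes L m m' \<Longrightarrow> insert m' (S - {m}) \<in> hops L S"
  unfolding hops_def by blast

lemma mod_succ_neq: "1 < L \<Longrightarrow> (x::nat) < L \<Longrightarrow> (x + 1) mod L \<noteq> x"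
  using mod_add_neq[of 1 L x] by simp

lemma insert_diff_eq_iff:
  assumes "b \<in> S" "a \<notin> S" "d \<in> S" "c \<notin> S"
  shows "insert a (S - {b}) = insert c (S - {d}) \<longleftrightarrow> a = c \<and> b = d"
proof
  assume eq: "insert a (S - {b}) = insert c (S - {d})"
  then have "a = c" using assms by (metis Diff_iff insertE insertI1)
  moreover have "b \<notin> insert c (S - {d})" using eq assms by (metis Diff_iff insertE singletonI)
  ultimately show "a = c \<and> b = d" using assms by blast
qed simp

lemma hopping_entry_hop:
  assumes "0 < L" "S \<in> configs L" "x mod L \<noteq> y mod L" "m \<in> S" "m' \<notin> S"
  shows "hopping L x y \<sigma> (insert m' (S - {m})) S =
    (if m' = (x mod L, \<sigma>) \<and> m = (y mod L, \<sigma>) then jw_sign (S - {m}) m' * jw_sign S m else 0)"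
  unfolding hopping_entry[OF assms(1-3)]
  using insert_diff_eq_iff[OF assms(4,5), of "(y mod L, \<sigma>)" "(x mod L, \<sigma>)"] assms(4,5) by auto

lemma sum_of_bool_eq:
  "(x::nat) < L \<Longrightarrow> (\<Sum>j<L. of_bool (x = j \<and> P j) :: 'a::semiring_1) = of_bool (P x)"
proof -
  assume "x < L"
  have "(\<Sum>j<L. of_bool (x = j \<and> P j) :: 'a) = (\<Sum>j<L. if j = x then of_bool (P x) else 0)"
    by (rule sum.cong) auto
  then show ?thesis using \<open>x < L\<close> by simp
qed

lemma hubbard_hop_entry:
  assumes L: "2 < L" and S: "S \<in> configs L" and m: "m \<in> S" "m' \<notin> S" and adj: "adjacent_modes L m m'"
  shows "hubbard L U (insert m' (S - {m})) S = -2 * (jw_sign (S - {m}) m' * jw_sign S m)"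
proof -
  let ?T = "insert m' (S - {m})" and ?v = "jw_sign (S - {m}) m' * jw_sign S m"
  obtain x x' \<tau> where mx: "m = (x, \<tau>)" "m' = (x', \<tau>)" "x < L" "x' < L"
    using adj unfolding adjacent_modes_def by (cases m, cases m') auto
  have L0: "0 < L" using L by simp
  have hop_j: "(\<Sum>\<sigma>\<in>UNIV. -2 * (hopping L j (j + 1) \<sigma> ?T S + hopping L (j + 1) j \<sigma> ?T S))
      = -2 * ?v * (of_bool (x' = j \<and> x = (j + 1) mod L) + of_bool (x = j \<and> x' = (j + 1) mod L))"
    if j: "j < L" for j
  proof -
    have ne: "j mod L \<noteq> (j + 1) mod L" using mod_succ_neq[of L j] j L by simp
    have "hopping L j (j + 1) \<sigma> ?T S = (if \<sigma> = \<tau> then of_bool (x' = j \<and> x = (j + 1) mod L) * ?v else 0)"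
      "hopping L (j + 1) j \<sigma> ?T S = (if \<sigma> = \<tau> then of_bool (x = j \<and> x' = (j + 1) mod L) * ?v else 0)"
      for \<sigma>
      using hopping_entry_hop[OF L0 S ne m, of \<sigma>] hopping_entry_hop[OF L0 S ne[symmetric] m, of \<sigma>] j
      unfolding mx by auto
    then show ?thesis by (cases \<tau>) (simp_all add: UNIV_bool algebra_simps)
  qed
  have "\<not> (x' = (x + 1) mod L \<and> x = (x' + 1) mod L)"
  proof
    assume "x' = (x + 1) mod L \<and> x = (x' + 1) mod L"
    then have "x = ((x + 1) mod L + 1) mod L" by metis
    also have "\<dots> = (x + 2) mod L" by (simp add: mod_Suc_eq)
    finally show False using mod_add_neq[of 2 L x] L mx(3) by simp
  qed
  moreover have "x' = (x + 1) mod L \<or> x = (x' + 1) mod L"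
    using adj mx unfolding adjacent_modes_def by auto
  ultimately have count: "(\<Sum>j<L. of_bool (x' = j \<and> x = (j + 1) mod L)
                                + of_bool (x = j \<and> x' = (j + 1) mod L) :: complex) = 1"
    unfolding sum.distrib sum_of_bool_eq[OF mx(4)] sum_of_bool_eq[OF mx(3)] by auto
  have "?T \<noteq> S" using m by auto
  then have "hubbard L U ?T S
      = (\<Sum>j<L. \<Sum>\<sigma>\<in>UNIV. -2 * (hopping L j (j + 1) \<sigma> ?T S + hopping L (j + 1) j \<sigma> ?T S))"
    unfolding hubbard_split using interaction_entry[OF L0 S] by simp
  also have "\<dots> = (\<Sum>j<L. -2 * ?v * (of_bool (x' = j \<and> x = (j + 1) mod L)
                                         + of_bool (x = j \<and> x' = (j + 1) mod L)))"
    by (rule sum.cong[OF refl], rule hop_j) simp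
  also have "\<dots> = -2 * ?v" using count by (simp only: sum_distrib_left[symmetric] mult_1_right)
  finally show ?thesis .
qed

lemma hubbard_hop_entry_nonzero:
  "2 < L \<Longrightarrow> S \<in> configs L \<Longrightarrow> m \<in> S \<Longrightarrow> m' \<notin> S \<Longrightarrow> adjacent_modes L m m'
   \<Longrightarrow> hubbard L U (insert m' (S - {m})) S \<noteq> 0"
  using hubbard_hop_entry[of L S m m' U] jw_sign_cases[of "S - {m}" m'] jw_sign_cases[of S m] by auto

lemma hubbard_diag_entry:
  assumes "2 < L" "S \<in> configs L"
  shows "hubbard L U S S = (\<Sum>j<L. 4 * complex_of_real U *
           ((of_bool ((j, True) \<in> S) - 1/2) * (of_bool ((j, False) \<in> S) - 1/2)))"
proof -
  have L0: "0 < L" using assms by simp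
  have no_hop: "hopping L x y \<sigma> S S = 0" if "x mod L \<noteq> y mod L" for x y \<sigma>
    using hopping_entry[OF L0 assms(2) that] by auto
  have "hopping L j (j + 1) \<sigma> S S = 0 \<and> hopping L (j + 1) j \<sigma> S S = 0" if "j < L" for j \<sigma>
  proof -
    have "j mod L \<noteq> (j + 1) mod L" using mod_succ_neq[of L j] that assms(1) by simp
    then show ?thesis using no_hop by metis
  qed
  then show ?thesis unfolding hubbard_split
    using interaction_entry[OF L0 assms(2)] by simp
qed

lemma hubbard_offdiag_entry:
  assumes "2 < L" "S \<in> configs L" "T \<noteq> S" "hubbard L U T S \<noteq> 0"
  shows "T \<in> hops L S"
proof -
  have L0: "0 < L" using assms by simp
  have "(\<Sum>j<L. \<Sum>\<sigma>\<in>UNIV. -2 * (hopping L j (j + 1) \<sigma> T S + hopping L (j + 1) j \<sigma> T S)) \<noteq> 0"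
    using assms(3,4) interaction_entry[OF L0 assms(2)] unfolding hubbard_split by simp
  then obtain j where j: "j < L"
    and "(\<Sum>\<sigma>\<in>UNIV. -2 * (hopping L j (j + 1) \<sigma> T S + hopping L (j + 1) j \<sigma> T S)) \<noteq> 0"
    by (meson lessThan_iff sum.not_neutral_contains_not_neutral)
  then obtain \<sigma> where "hopping L j (j + 1) \<sigma> T S \<noteq> 0 \<or> hopping L (j + 1) j \<sigma> T S \<noteq> 0"
    by (metis (no_types, lifting) add.right_neutral mult_zero_right sum.neutral)
  moreover have ne: "j mod L \<noteq> (j + 1) mod L" using mod_succ_neq[of L j] j assms(1) by simp
  moreover have adj: "adjacent_modes L (j, \<sigma>) ((j + 1) mod L, \<sigma>)"
    using adjacent_modes_succ[OF L0, of j] j by simp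
  ultimately show ?thesis
  proof (elim disjE)
    assume "hopping L j (j + 1) \<sigma> T S \<noteq> 0"
    then show ?thesis using hopping_entry[OF L0 assms(2) ne, of \<sigma> T] j adj
      by (auto split: if_splits intro!: hopsI simp: adjacent_modes_sym)
  next
    assume "hopping L (j + 1) j \<sigma> T S \<noteq> 0"
    then show ?thesis using hopping_entry[OF L0 assms(2) ne[symmetric], of \<sigma> T] j adj
      by (auto split: if_splits intro!: hopsI)
  qed
qed

lemma hubbard_symmetric:
  assumes "0 < L" "S \<in> configs L" "S' \<in> configs L"
  shows "hubbard L U S' S = hubbard L U S S'"
proof -
  have "interaction L j S' S = interaction L j S S'" for j
    using interaction_entry[OF assms(1,2), of j S'] interaction_entry[OF assms(1,3), of j S] by auto
  moreover have "hopping L x y \<sigma> S' S = hopping L y x \<sigma> S S'" for x y \<sigma>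
    unfolding hopping_def op_mul_def cre_def by (simp add: mult.commute)
  ultimately show ?thesis unfolding hubbard_split by (simp add: add.commute)
qed

lemma hubbard_product_expansion:
  assumes "2 < L" "S \<in> configs L"
  shows "(\<Sum>T\<in>configs L. G T * hubbard L U T S) = G S * hubbard L U S S + (\<Sum>T\<in>hops L S. G T * hubbard L U T S)"
proof -
  have sub: "insert S (hops L S) \<subseteq> configs L" using hops_configs[OF assms(2)] assms(2) by auto
  have "(\<Sum>T\<in>configs L. G T * hubbard L U T S) = (\<Sum>T\<in>insert S (hops L S). G T * hubbard L U T S)"
    by (rule sum.mono_neutral_right[OF finite_configs sub])
       (use hubbard_offdiag_entry[OF assms] in auto)
  then show ?thesis using finite_hops[OF assms(2)] not_in_hops by simp
qed

lemma commutes_hubbard_entry: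
  assumes "commutes L G (hubbard L U)" "2 < L" "S' \<in> configs L" "S \<in> configs L"
  shows "G S' S * hubbard L U S S + (\<Sum>T\<in>hops L S. G S' T * hubbard L U T S)
       = hubbard L U S' S' * G S' S + (\<Sum>T\<in>hops L S'. hubbard L U T S' * G T S)"
proof -
  have "(\<Sum>T\<in>configs L. G S' T * hubbard L U T S) = (\<Sum>T\<in>configs L. hubbard L U S' T * G T S)"
    using assms unfolding commutes_def op_eq_def op_mul_def by auto
  also have "\<dots> = (\<Sum>T\<in>configs L. G T S * hubbard L U T S')"
    by (rule sum.cong) (use hubbard_symmetric[OF _ _ assms(3)] assms(2) in \<open>auto simp: mult.commute\<close>)
  finally show ?thesis
    unfolding hubbard_product_expansion[OF assms(2,4)] hubbard_product_expansion[OF assms(2,3)]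
    by (simp add: mult.commute)
qed

lemma commutes_hubbard_transpose:
  assumes "commutes L G (hubbard L U)" "0 < L"
  shows "commutes L (\<lambda>S' S. G S S') (hubbard L U)"
  unfolding commutes_def op_eq_def
proof (intro ballI)
  fix S' S assume S': "S' \<in> configs L" and S: "S \<in> configs L"
  have sym: "hubbard L U T R = hubbard L U R T" if "T \<in> configs L" "R \<in> configs L" for T R
    using hubbard_symmetric[OF assms(2) that(2,1)] .
  have "op_mul L (\<lambda>S' S. G S S') (hubbard L U) S' S = (\<Sum>T\<in>configs L. hubbard L U S T * G T S')"
    unfolding op_mul_def by (rule sum.cong) (use sym S in \<open>auto simp: mult.commute\<close>)
  also have "\<dots> = (\<Sum>T\<in>configs L. G S T * hubbard L U T S')"
    using assms(1) S S' unfolding commutes_def op_eq_def op_mul_def by auto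
  also have "\<dots> = op_mul L (hubbard L U) (\<lambda>S' S. G S S') S' S"
    unfolding op_mul_def by (rule sum.cong) (use sym S' in \<open>auto simp: mult.commute\<close>)
  finally show "op_mul L (\<lambda>S' S. G S S') (hubbard L U) S' S = op_mul L (hubbard L U) (\<lambda>S' S. G S S') S' S" .
qed

lemma jw_sign_singleton: "jw_sign {(y, \<sigma>)} (x, \<sigma>) = (if y < x then -1 else 1)"
proof -
  have "{m' \<in> {(y, \<sigma>)}. mode_rank m' < mode_rank (x, \<sigma>)} = (if y < x then {(y, \<sigma>)} else {})"
    by (auto simp: mode_rank_def)
  then show ?thesis unfolding jw_sign_def by simp
qed

lemma jw_sign_pair_self: "x \<noteq> y \<Longrightarrow> jw_sign {(x, \<sigma>), (y, \<sigma>)} (x, \<sigma>) = (if y < x then -1 else 1)"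
proof -
  assume "x \<noteq> y"
  then have "{m' \<in> {(x, \<sigma>), (y, \<sigma>)}. mode_rank m' < mode_rank (x, \<sigma>)} = (if y < x then {(y, \<sigma>)} else {})"
    by (auto simp: mode_rank_def)
  then show ?thesis unfolding jw_sign_def by simp
qed

lemma empty_in_configs: "{} \<in> configs L"
  unfolding configs_def by simp

lemma hubbard_diag_pair:
  assumes "2 < L" "x < L" "y < L" "x \<noteq> y"
  shows "hubbard L U {(x, \<sigma>), (y, \<sigma>)} {(x, \<sigma>), (y, \<sigma>)} = hubbard L U {} {} - 4 * complex_of_real U"
proof -
  let ?S = "{(x, \<sigma>), (y, \<sigma>)}"
  let ?f = "\<lambda>S j. 4 * complex_of_real U * ((of_bool ((j, True) \<in> S) - 1/2) * (of_bool ((j, False) \<in> S) - 1/2))"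
  have Sc: "?S \<in> configs L" using assms unfolding configs_def modes_def by auto
  have "?f ?S j = ?f {} j + ((if j = x then -2 * complex_of_real U else 0)
                             + (if j = y then -2 * complex_of_real U else 0))" for j
    using assms(4) by (cases \<sigma>) (auto simp: algebra_simps)
  then have "hubbard L U ?S ?S = (\<Sum>j<L. ?f {} j + ((if j = x then -2 * complex_of_real U else 0)
                                                  + (if j = y then -2 * complex_of_real U else 0)))"
    unfolding hubbard_diag_entry[OF assms(1) Sc] by presburger
  also have "\<dots> = hubbard L U {} {} + (\<Sum>j<L. (if j = x then -2 * complex_of_real U else 0)
                                           + (if j = y then -2 * complex_of_real U else 0))"
    unfolding hubbard_diag_entry[OF assms(1) empty_in_configs] sum.distrib ..
  also have "\<dots> = hubbard L U {} {} - 4 * complex_of_real U"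
    using assms(2,3) by (simp add: sum.distrib)
  finally show ?thesis .
qed

section \<open>Pair amplitudes of an operator commuting with the Hamiltonian\<close>

lemma sum_eq_two_candidates:
  assumes "finite H" "T1 \<noteq> T2"
    "c1 \<Longrightarrow> T1 \<in> H" "c2 \<Longrightarrow> T2 \<in> H"
    "\<And>T. T \<in> H \<Longrightarrow> f T \<noteq> 0 \<Longrightarrow> (T = T1 \<and> c1) \<or> (T = T2 \<and> c2)"
  shows "sum f H = (if c1 then f T1 else 0) + (if c2 then f T2 else 0)"
proof -
  have "sum f H = sum f {T. (T = T1 \<and> c1) \<or> (T = T2 \<and> c2)}"
    by (rule sum.mono_neutral_right[OF assms(1)]) (use assms(3-5) in auto)
  also have "\<dots> = (if c1 then f T1 else 0) + (if c2 then f T2 else 0)"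
  proof (cases c1; cases c2)
    assume c1 c2
    then have "{T. (T = T1 \<and> c1) \<or> (T = T2 \<and> c2)} = {T1, T2}" by auto
    then show ?thesis using \<open>c1\<close> \<open>c2\<close> assms(2) by simp
  qed auto
  finally show ?thesis .
qed

lemma sum_eq_single_candidate:
  assumes "finite H" "c \<Longrightarrow> T1 \<in> H" "\<And>T. T \<in> H \<Longrightarrow> f T \<noteq> 0 \<Longrightarrow> T = T1 \<and> c"
  shows "sum f H = (if c then f T1 else 0)"
proof -
  have "sum f H = sum f {T. T = T1 \<and> c}"
    by (rule sum.mono_neutral_right[OF assms(1)]) (use assms(2,3) in auto)
  then show ?thesis by (cases c) auto
qed

text \<open>For odd \<open>L\<close> periodicity alone kills \<open>M\<close>; for even \<open>L\<close> the alternating sum of the relation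
  over one period telescopes to zero.\<close>

lemma periodic_alternating_zero:
  fixes M N :: "nat \<Rightarrow> complex" and c :: complex
  assumes L: "0 < L" and c: "c \<noteq> 0" and alt: "\<And>a. M (Suc a) = - M a"
    and perM: "\<And>a. M (a + L) = M a" and perN: "\<And>a. N (a + L) = N a"
    and rel: "\<And>a. c * M a = (if b then 2 * (N (Suc a) + N a) else 0)"
  shows "M a = 0"
proof -
  have pw: "M n = (-1) ^ n * M 0" for n by (induction n) (auto simp: alt)
  have "M 0 = 0"
  proof (cases "b \<and> even L")
    case False
    then consider "\<not> b" | "odd L" by blast
    then show ?thesis
    proof cases
      case 1
      then show ?thesis using rel[of 0] c by simp
    next
      case 2
      then have "- M 0 = M 0" using pw[of L] perM[of 0] by simp
      then show ?thesis by simp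
    qed
  next
    case True
    define g where "g a = (-1) ^ a * N a" for a
    have sign_M: "(-1) ^ a * (c * M a) = c * M 0" for a
      unfolding pw[of a] by (simp add: power_mult_distrib[symmetric] algebra_simps)
    have sign_N: "(-1) ^ a * (c * M a) = 2 * (g a - g (Suc a))" for a
      using rel[of a] True by (simp add: g_def ring_distribs)
    have "of_nat L * c * M 0 = (\<Sum>a<L. c * M 0)" by simp
    also have "\<dots> = (\<Sum>a<L. (-1) ^ a * (c * M a))"
      by (rule sum.cong[OF refl]) (rule sign_M[symmetric])
    also have "\<dots> = (\<Sum>a<L. 2 * (g a - g (Suc a)))"
      by (rule sum.cong[OF refl]) (rule sign_N)
    also have "\<dots> = 2 * (\<Sum>a<L. g a - g (Suc a))"
      by (rule sum_distrib_left[symmetric])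
    also have "\<dots> = 2 * (g 0 - g L)"
      by (simp only: sum_lessThan_telescope')
    also have "\<dots> = 0" unfolding g_def using True perN[of 0] by simp
    finally show ?thesis using L c by simp
  qed
  then show ?thesis using pw[of a] by simp
qed

locale hubbard_commutant =
  fixes L k :: nat and U :: real and G :: fop and \<sigma> :: bool
  assumes ring_size: "2 * k + 2 \<le> L" and range_ge_2: "2 \<le> k"
    and k_local: "k_local L k G" and commutes: "commutes L G (hubbard L U)"
begin

abbreviation smode :: "nat \<Rightarrow> mode" where
  "smode x \<equiv> (x mod L, \<sigma>)"

lemma L_gt_2: "2 < L"
  using ring_size range_ge_2 by linarith

lemma L_pos: "0 < L"
  using L_gt_2 by simp

lemma smode_shift_neq: "0 < d \<Longrightarrow> d < L \<Longrightarrow> smode (x + d) \<noteq> smode x"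
  using mod_add_neq by simp

lemma smode_pred_shift: "0 < d \<Longrightarrow> smode (x + d + (L - 1)) = smode (x + (d - 1))"
proof -
  assume "0 < d"
  then have "x + d + (L - 1) = x + (d - 1) + L" using L_pos by simp
  then show ?thesis by (metis mod_add_self2)
qed

lemma vanish_far:
  assumes "P \<in> configs L" "T \<in> configs L" "k \<le> d" "d + k \<le> L"
    "(smode x \<in> P) \<noteq> (smode x \<in> T)" "(smode (x + d) \<in> P) \<noteq> (smode (x + d) \<in> T)"
  shows "G P T = 0"
  by (rule k_local_far_pair[OF k_local assms])

lemma vanish_far_pred:
  assumes "P \<in> configs L" "T \<in> configs L"
    "(smode (x + (L - 1)) \<in> P) \<noteq> (smode (x + (L - 1)) \<in> T)" "(smode (x + k) \<in> P) \<noteq> (smode (x + k) \<in> T)"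
  shows "G P T = 0"
  using vanish_far[OF assms(1,2), of "k + 1" "x + (L - 1)"] assms(3,4) ring_size
    smode_pred_shift[of "k + 1" "x + (L - 1)"]
  by (simp add: add.commute add.left_commute)

lemma smode_adjacent_cases:
  "adjacent_modes L (smode x) m' \<Longrightarrow> m' = smode (x + 1) \<or> m' = smode (x + (L - 1))"
  using adjacent_modes_cases[OF L_pos] by blast

lemma smode_far_distinct:
  "smode (a + k) \<noteq> smode a" "smode (a + (k - 1)) \<noteq> smode a" "smode (a + 1) \<noteq> smode a"
  "smode (a + (k - 1)) \<noteq> smode (a + k)" "smode (a + 1) \<noteq> smode (a + k)"
proof -
  show "smode (a + k) \<noteq> smode a" "smode (a + (k - 1)) \<noteq> smode a" "smode (a + 1) \<noteq> smode a"
    using smode_shift_neq[of k a] smode_shift_neq[of "k - 1" a] smode_shift_neq[of 1 a] ring_size range_ge_2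
    by simp_all
  show "smode (a + (k - 1)) \<noteq> smode (a + k)"
    using smode_shift_neq[of 1 "a + (k - 1)"] L_gt_2 range_ge_2 by (simp add: add.assoc)
  have "k - 1 < L" "a + 1 + (k - 1) = a + k" using ring_size range_ge_2 by linarith+
  then show "smode (a + 1) \<noteq> smode (a + k)"
    using smode_shift_neq[of "k - 1" "a + 1"] range_ge_2 by fastforce
qed

lemma far_sites_distinct:
  "(a + k) mod L \<noteq> a mod L" "(a + (k - 1)) mod L \<noteq> a mod L" "(a + 1) mod L \<noteq> a mod L"
  "(a + (k - 1)) mod L \<noteq> (a + k) mod L" "(a + 1) mod L \<noteq> (a + k) mod L"
  using smode_far_distinct[of a] by simp_all

lemma adjacent_smode_succ: "adjacent_modes L (smode x) (smode (x + 1))"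
  using adjacent_modes_succ[OF L_pos] .

lemma adjacent_smode_pred: "0 < d \<Longrightarrow> adjacent_modes L (smode (x + d)) (smode (x + (d - 1)))"
  using adjacent_modes_succ[OF L_pos, of "x + (d - 1)" \<sigma>] by (simp add: adjacent_modes_sym)

text \<open>By locality, of all hops out of \<open>P \<union> {a, a + k}\<close> only the inward moves of the two outer
  particles survive.\<close>

lemma column_hop_candidates:
  assumes P: "P \<in> configs L" "smode a \<notin> P" "smode (a + k) \<notin> P"
    and T: "T \<in> hops L (insert (smode a) (insert (smode (a + k)) P))" and G: "G P T \<noteq> 0"
  shows "(T = insert (smode (a + 1)) (insert (smode (a + k)) P) \<and> smode (a + 1) \<notin> P)
       \<or> (T = insert (smode a) (insert (smode (a + (k - 1))) P) \<and> smode (a + (k - 1)) \<notin> P)"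
proof -
  let ?Q = "insert (smode a) (insert (smode (a + k)) P)"
  obtain m m' where mm: "m \<in> ?Q" "m' \<notin> ?Q" "adjacent_modes L m m'" "T = insert m' (?Q - {m})"
    using T unfolding hops_def by blast
  have Tc: "T \<in> configs L"
    using T hops_configs[of ?Q L] P(1) L_pos by (auto simp: configs_def modes_def)
  have AB: "smode (a + k) \<noteq> smode a" using smode_shift_neq ring_size range_ge_2 by simp
  consider "m = smode a" | "m = smode (a + k)" | "m \<noteq> smode a" "m \<noteq> smode (a + k)" by blast
  then show ?thesis
  proof cases
    case 1
    then have "m' = smode (a + 1) \<or> m' = smode (a + (L - 1))"
      using smode_adjacent_cases[of a m'] mm(3) by simp
    moreover have "m' \<noteq> smode (a + (L - 1))"
      using vanish_far_pred[OF P(1) Tc, of a] G mm P AB 1 by auto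
    ultimately show ?thesis using mm 1 P AB by auto
  next
    case 2
    have "m' = smode (a + k + 1) \<or> m' = smode (a + (k - 1))"
      using smode_adjacent_cases[of "a + k" m'] mm(3) 2 smode_pred_shift[of k a] range_ge_2 by simp
    moreover have "m' \<noteq> smode (a + k + 1)"
      using vanish_far[OF P(1) Tc, of "k + 1" a] G mm P AB 2 ring_size by (auto simp: add.assoc)
    ultimately show ?thesis using mm 2 P AB by (auto simp: insert_commute)
  next
    case 3
    then show ?thesis using vanish_far[OF P(1) Tc, of k a] G mm P ring_size by auto
  qed
qed

lemma row_hop_candidates:
  assumes P: "P \<in> configs L" "smode a \<notin> P" "smode (a + (k - 1)) \<notin> P" "smode (a + k) \<notin> P"
    and T: "T \<in> hops L P" and G: "G T (insert (smode a) (insert (smode (a + k)) P)) \<noteq> 0"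
  shows "T = insert (smode a) (P - {smode (a + 1)}) \<and> smode (a + 1) \<in> P"
proof -
  let ?Q = "insert (smode a) (insert (smode (a + k)) P)"
  obtain m m' where mm: "m \<in> P" "m' \<notin> P" "adjacent_modes L m' m" "T = insert m' (P - {m})"
    using T unfolding hops_def by (auto simp: adjacent_modes_sym)
  have Tc: "T \<in> configs L" using T hops_configs[OF P(1)] by auto
  have Qc: "?Q \<in> configs L" using P(1) L_pos by (auto simp: configs_def modes_def)
  have AB: "smode (a + k) \<noteq> smode a" using smode_shift_neq ring_size range_ge_2 by simp
  consider "m' = smode a" | "m' = smode (a + k)" | "m' \<noteq> smode a" "m' \<noteq> smode (a + k)" by blast
  then show ?thesis
  proof cases
    case 1
    then have "m = smode (a + 1) \<or> m = smode (a + (L - 1))"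
      using smode_adjacent_cases[of a m] mm(3) by simp
    moreover have "m \<noteq> smode (a + (L - 1))"
      using vanish_far_pred[OF Tc Qc, of a] G mm P AB 1 smode_shift_neq[of "L - 1" a] L_gt_2 by auto
    ultimately show ?thesis using mm 1 by auto
  next
    case 2
    have "m = smode (a + k + 1) \<or> m = smode (a + (k - 1))"
      using smode_adjacent_cases[of "a + k" m] mm(3) 2 smode_pred_shift[of k a] range_ge_2 by simp
    moreover have "m \<noteq> smode (a + k + 1)"
      using vanish_far[OF Tc Qc, of "k + 1" a] G mm P AB 2 ring_size smode_shift_neq[of 1 "a + k"] L_gt_2
      by (auto simp: add.assoc)
    ultimately show ?thesis using mm P(3) by auto
  next
    case 3
    then show ?thesis using vanish_far[OF Tc Qc, of k a] G mm P ring_size by auto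
  qed
qed

lemma column_hops_sum:
  assumes P: "P \<in> configs L" "smode a \<notin> P" "smode (a + (k - 1)) \<notin> P" "smode (a + k) \<notin> P"
  defines "Q \<equiv> insert (smode a) (insert (smode (a + k)) P)"
    and "TA \<equiv> insert (smode (a + 1)) (insert (smode (a + k)) P)"
    and "TB \<equiv> insert (smode a) (insert (smode (a + (k - 1))) P)"
  shows "(\<Sum>T\<in>hops L Q. G P T * hubbard L U T Q)
       = (if smode (a + 1) \<notin> P then G P TA * hubbard L U TA Q else 0) + G P TB * hubbard L U TB Q"
proof -
  have Qc: "Q \<in> configs L" using P(1) L_pos unfolding Q_def by (auto simp: configs_def modes_def)
  have A1: "smode (a + 1) \<notin> P \<Longrightarrow> TA \<in> hops L Q"
  proof -
    assume "smode (a + 1) \<notin> P"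
    then have "insert (smode (a + 1)) (Q - {smode a}) \<in> hops L Q"
      using P smode_far_distinct[of a] adjacent_modes_succ[OF L_pos, of a \<sigma>]
      by (intro hopsI) (auto simp: Q_def)
    moreover have "insert (smode (a + 1)) (Q - {smode a}) = TA"
      using P smode_far_distinct[of a] unfolding Q_def TA_def by auto
    ultimately show ?thesis by simp
  qed
  have B: "TB \<in> hops L Q"
  proof -
    have "insert (smode (a + (k - 1))) (Q - {smode (a + k)}) \<in> hops L Q"
      using adjacent_modes_succ[OF L_pos, of "a + (k - 1)" \<sigma>] range_ge_2 P smode_far_distinct[of a]
      by (intro hopsI) (auto simp: Q_def adjacent_modes_sym)
    moreover have "insert (smode (a + (k - 1))) (Q - {smode (a + k)}) = TB"
      using P smode_far_distinct[of a] unfolding Q_def TB_def by auto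
    ultimately show ?thesis by simp
  qed
  have "smode (a + k) \<in> TA" "smode (a + k) \<notin> TB"
    using P(4) smode_far_distinct(1,4)[of a] unfolding TA_def TB_def by (metis insert_iff)+
  then have "TA \<noteq> TB" by blast
  have "(\<Sum>T\<in>hops L Q. G P T * hubbard L U T Q)
      = (if smode (a + 1) \<notin> P then G P TA * hubbard L U TA Q else 0)
        + (if True then G P TB * hubbard L U TB Q else 0)"
  proof (rule sum_eq_two_candidates[OF finite_hops[OF Qc] \<open>TA \<noteq> TB\<close> A1 B])
    fix T assume "T \<in> hops L Q" "G P T * hubbard L U T Q \<noteq> 0"
    then show "(T = TA \<and> smode (a + 1) \<notin> P) \<or> (T = TB \<and> True)"
      using column_hop_candidates[OF P(1,2,4), of T] unfolding Q_def TA_def TB_def by auto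
  qed
  then show ?thesis by simp
qed

lemma row_hops_sum:
  assumes P: "P \<in> configs L" "smode a \<notin> P" "smode (a + (k - 1)) \<notin> P" "smode (a + k) \<notin> P"
  defines "Q \<equiv> insert (smode a) (insert (smode (a + k)) P)"
    and "R \<equiv> insert (smode a) (P - {smode (a + 1)})"
  shows "(\<Sum>T\<in>hops L P. hubbard L U T P * G T Q)
       = (if smode (a + 1) \<in> P then hubbard L U R P * G R Q else 0)"
proof (rule sum_eq_single_candidate[OF finite_hops[OF P(1)]])
  show "smode (a + 1) \<in> P \<Longrightarrow> R \<in> hops L P"
    using adjacent_modes_succ[OF L_pos, of a \<sigma>] P unfolding R_def
    by (auto intro!: hopsI simp: adjacent_modes_sym)
next
  fix T assume "T \<in> hops L P" "hubbard L U T P * G T Q \<noteq> 0"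
  then show "T = R \<and> smode (a + 1) \<in> P"
    using row_hop_candidates[OF P, of T] unfolding Q_def R_def by auto
qed

lemma pair_commutator_identity:
  assumes P: "P \<in> configs L" "smode a \<notin> P" "smode (a + (k - 1)) \<notin> P" "smode (a + k) \<notin> P"
  defines "Q \<equiv> insert (smode a) (insert (smode (a + k)) P)"
    and "TA \<equiv> insert (smode (a + 1)) (insert (smode (a + k)) P)"
    and "TB \<equiv> insert (smode a) (insert (smode (a + (k - 1))) P)"
    and "R \<equiv> insert (smode a) (P - {smode (a + 1)})"
  shows "G P TB * hubbard L U TB Q + (if smode (a + 1) \<in> P then 0 else G P TA * hubbard L U TA Q)
       = (if smode (a + 1) \<in> P then hubbard L U R P * G R Q else 0)"
proof -
  have Qc: "Q \<in> configs L" using P(1) L_pos unfolding Q_def by (auto simp: configs_def modes_def)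
  have "G P Q = 0"
    using vanish_far[OF P(1) Qc, of k a] P ring_size smode_far_distinct[of a] unfolding Q_def by auto
  then have "(\<Sum>T\<in>hops L Q. G P T * hubbard L U T Q) = (\<Sum>T\<in>hops L P. hubbard L U T P * G T Q)"
    using commutes_hubbard_entry[OF commutes L_gt_2 P(1) Qc] by simp
  then show ?thesis
    unfolding Q_def TA_def TB_def R_def column_hops_sum[OF P] row_hops_sum[OF P]
    by (cases "smode (a + 1) \<in> P") (simp_all add: add.commute)
qed

text \<open>\<open>pair_amplitude x y = - <0| G c\<^sup>\<dagger>\<^sub>x c\<^sup>\<dagger>\<^sub>y |0>\<close>: the Jordan-Wigner sign of the basis state is
  absorbed, which makes it antisymmetric in \<open>x\<close> and \<open>y\<close>.\<close>

definition pair_sign :: "nat \<Rightarrow> nat \<Rightarrow> complex" where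
  "pair_sign x y = (if x mod L < y mod L then -1 else 1)"

definition pair_amplitude :: "nat \<Rightarrow> nat \<Rightarrow> complex" where
  "pair_amplitude x y = G {} {smode x, smode y} * pair_sign x y"

lemma pair_sign_swap: "x mod L \<noteq> y mod L \<Longrightarrow> pair_sign y x = - pair_sign x y"
  unfolding pair_sign_def by auto

lemma pair_sign_nonzero: "pair_sign x y \<noteq> 0"
  unfolding pair_sign_def by simp

lemma pair_amplitude_swap: "x mod L \<noteq> y mod L \<Longrightarrow> pair_amplitude y x = - pair_amplitude x y"
  unfolding pair_amplitude_def using pair_sign_swap[of x y] by (simp add: insert_commute)

lemma vacuum_pair_entry: "G {} {smode x, smode y} = pair_amplitude x y * pair_sign x y"
  unfolding pair_amplitude_def pair_sign_def by simp

lemma pair_amplitude_period: "pair_amplitude (x + L) (y + L) = pair_amplitude x y"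
  unfolding pair_amplitude_def pair_sign_def by simp

lemma hop_pair_term:
  assumes xy: "x mod L \<noteq> y mod L" "x' mod L \<noteq> y mod L" and adj: "adjacent_modes L (smode x) (smode x')"
  shows "G {} {smode x', smode y} * hubbard L U {smode x', smode y} {smode x, smode y}
       = -2 * pair_sign x y * pair_amplitude x' y"
proof -
  define u v w where "u = x mod L" and "v = y mod L" and "w = x' mod L"
  have "u < L" unfolding u_def using L_pos by simp
  have "w \<noteq> u"
  proof
    assume "w = u"
    then show False using adj mod_succ_neq[OF _ \<open>u < L\<close>] L_gt_2
      unfolding adjacent_modes_def u_def w_def by auto
  qed
  have uv: "u \<noteq> v" and wv: "w \<noteq> v" using xy unfolding u_def v_def w_def by simp_all
  have Sc: "{(u, \<sigma>), (v, \<sigma>)} \<in> configs L"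
    using L_pos unfolding configs_def modes_def u_def v_def by auto
  have "hubbard L U (insert (w, \<sigma>) ({(u, \<sigma>), (v, \<sigma>)} - {(u, \<sigma>)})) {(u, \<sigma>), (v, \<sigma>)}
      = -2 * (jw_sign ({(u, \<sigma>), (v, \<sigma>)} - {(u, \<sigma>)}) (w, \<sigma>) * jw_sign {(u, \<sigma>), (v, \<sigma>)} (u, \<sigma>))"
    using hubbard_hop_entry[OF L_gt_2 Sc, of "(u, \<sigma>)" "(w, \<sigma>)" U] adj \<open>w \<noteq> u\<close> wv
    unfolding u_def w_def by auto
  moreover have "{(u, \<sigma>), (v, \<sigma>)} - {(u, \<sigma>)} = {(v, \<sigma>)}" using uv by auto
  ultimately have H: "hubbard L U {(w, \<sigma>), (v, \<sigma>)} {(u, \<sigma>), (v, \<sigma>)}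
      = -2 * ((if v < w then -1 else 1) * (if v < u then -1 else 1))"
    by (simp add: jw_sign_singleton jw_sign_pair_self[OF uv])
  have "G {} {(w, \<sigma>), (v, \<sigma>)} * hubbard L U {(w, \<sigma>), (v, \<sigma>)} {(u, \<sigma>), (v, \<sigma>)}
      = -2 * (if u < v then -1 else 1) * (pair_amplitude x' y)"
    unfolding H vacuum_pair_entry[of x' y, folded w_def v_def] pair_sign_def
    using uv wv unfolding w_def[symmetric] v_def[symmetric] by (auto simp: not_less_iff_gr_or_eq)
  then show ?thesis unfolding pair_sign_def u_def v_def w_def .
qed

definition shift_left :: "nat \<Rightarrow> mode set \<Rightarrow> mode set" where
  "shift_left a X = (if smode (a + 1) \<in> X then insert (smode a) (X - {smode (a + 1)}) else X)"

lemma pair_shift_step: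
  assumes X: "X \<in> configs L" "smode a \<notin> X" "smode (a + (k - 1)) \<notin> X" "smode (a + k) \<notin> X"
  shows "G X (insert (smode a) (insert (smode (a + (k - 1))) X)) = 0
     \<longleftrightarrow> G (shift_left a X) (insert (smode (a + 1)) (insert (smode (a + k)) (shift_left a X))) = 0"
proof -
  let ?Q = "insert (smode a) (insert (smode (a + k)) X)"
  let ?TA = "insert (smode (a + 1)) (insert (smode (a + k)) X)"
  let ?TB = "insert (smode a) (insert (smode (a + (k - 1))) X)"
  let ?R = "insert (smode a) (X - {smode (a + 1)})"
  have Qc: "?Q \<in> configs L" using X(1) L_pos by (auto simp: configs_def modes_def)
  have "?TB = insert (smode (a + (k - 1))) (?Q - {smode (a + k)})"
    using X smode_far_distinct[of a] by auto
  then have hB: "hubbard L U ?TB ?Q \<noteq> 0"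
    using hubbard_hop_entry_nonzero[OF L_gt_2 Qc, of "smode (a + k)" "smode (a + (k - 1))"]
      adjacent_smode_pred[of k a] range_ge_2 X smode_far_distinct[of a] by auto
  show ?thesis
  proof (cases "smode (a + 1) \<in> X")
    case True
    have "hubbard L U ?R X \<noteq> 0"
      using hubbard_hop_entry_nonzero[OF L_gt_2 X(1) True X(2)] adjacent_smode_succ[of a]
      by (simp add: adjacent_modes_sym)
    moreover have "G X ?TB * hubbard L U ?TB ?Q = hubbard L U ?R X * G ?R ?Q"
      using pair_commutator_identity[OF X] True by simp
    moreover have "insert (smode (a + 1)) (insert (smode (a + k)) ?R) = ?Q"
      using True smode_far_distinct[of a] by auto
    ultimately show ?thesis using hB True unfolding shift_left_def by auto
  next
    case False
    have "?TA = insert (smode (a + 1)) (?Q - {smode a})"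
      using X False smode_far_distinct[of a] by auto
    then have hA: "hubbard L U ?TA ?Q \<noteq> 0"
      using hubbard_hop_entry_nonzero[OF L_gt_2 Qc, of "smode a" "smode (a + 1)"]
        adjacent_smode_succ[of a] X False smode_far_distinct[of a] by auto
    have sum: "G X ?TB * hubbard L U ?TB ?Q + G X ?TA * hubbard L U ?TA ?Q = 0"
      using pair_commutator_identity[OF X] False by simp
    have "G X ?TB = 0 \<longleftrightarrow> G X ?TA = 0"
    proof
      assume "G X ?TB = 0"
      then show "G X ?TA = 0" using sum hA by simp
    next
      assume "G X ?TA = 0"
      then show "G X ?TB = 0" using sum hB by simp
    qed
    then show ?thesis using False unfolding shift_left_def by simp
  qed
qed

lemma far_pair_relation: "pair_amplitude (a + 1) (a + k) + pair_amplitude a (a + (k - 1)) = 0"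
proof -
  have "G {} {smode a, smode (a + (k - 1))} * hubbard L U {smode a, smode (a + (k - 1))} {smode a, smode (a + k)}
      + G {} {smode (a + 1), smode (a + k)} * hubbard L U {smode (a + 1), smode (a + k)} {smode a, smode (a + k)} = 0"
    using pair_commutator_identity[of "{}" a] L_pos by (simp add: configs_def)
  moreover have "G {} {smode a, smode (a + (k - 1))} * hubbard L U {smode a, smode (a + (k - 1))} {smode a, smode (a + k)}
      = -2 * pair_sign (a + k) a * pair_amplitude (a + (k - 1)) a"
    using hop_pair_term[of "a + k" a "a + (k - 1)"] far_sites_distinct[of a] adjacent_smode_pred[of k a] range_ge_2
    by (simp add: insert_commute)
  moreover have "G {} {smode (a + 1), smode (a + k)} * hubbard L U {smode (a + 1), smode (a + k)} {smode a, smode (a + k)}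
      = -2 * pair_sign a (a + k) * pair_amplitude (a + 1) (a + k)"
    using hop_pair_term[of a "a + k" "a + 1"] far_sites_distinct[of a] adjacent_smode_succ[of a] by simp
  ultimately have "-2 * pair_sign a (a + k) * (pair_amplitude (a + 1) (a + k) + pair_amplitude a (a + (k - 1))) = 0"
    using pair_sign_swap[of a "a + k"] pair_amplitude_swap[of a "a + (k - 1)"] far_sites_distinct[of a]
    by (simp add: algebra_simps)
  then show ?thesis using pair_sign_nonzero by simp
qed

lemma near_hop_candidates:
  assumes T: "T \<in> hops L {smode a, smode (a + (k - 1))}" and G: "G {} T \<noteq> 0"
  shows "3 \<le> k \<and> (T = {smode (a + 1), smode (a + (k - 1))} \<or> T = {smode a, smode (a + (k - 2))})"
proof -
  let ?Q = "{smode a, smode (a + (k - 1))}"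
  obtain m m' where mm: "m \<in> ?Q" "m' \<notin> ?Q" "adjacent_modes L m m'" "T = insert m' (?Q - {m})"
    using T unfolding hops_def by blast
  have Qc: "?Q \<in> configs L" using L_pos by (simp add: configs_def modes_def)
  have Tc: "T \<in> configs L" using T hops_configs[OF Qc] by blast
  have ne: "smode (a + (k - 1)) \<noteq> smode a" using smode_far_distinct(2)[of a] .
  from mm(1) consider "m = smode a" | "m = smode (a + (k - 1))" by blast
  then show ?thesis
  proof cases
    case 1
    then have "m' = smode (a + 1) \<or> m' = smode (a + (L - 1))"
      using smode_adjacent_cases[of a m'] mm(3) by simp
    moreover have "m' \<noteq> smode (a + (L - 1))"
    proof
      assume m': "m' = smode (a + (L - 1))"
      have "smode (a + (L - 1) + k) = smode (a + (k - 1))"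
        using smode_pred_shift[of k a] range_ge_2 by (simp add: ac_simps)
      then have "G {} T = 0"
        using vanish_far[OF empty_in_configs Tc, of k "a + (L - 1)"] m' mm(2,4) 1 ne ring_size by auto
      then show False using G by simp
    qed
    ultimately have m': "m' = smode (a + 1)" by simp
    have "k \<noteq> 2"
    proof
      assume "k = 2"
      then show False using mm(2) m' by simp
    qed
    moreover have "T = {smode (a + 1), smode (a + (k - 1))}" using mm(4) 1 m' ne by blast
    ultimately show ?thesis using range_ge_2 by simp
  next
    case 2
    then have "m' = smode (a + (k - 1) + 1) \<or> m' = smode (a + (k - 1) + (L - 1))"
      using smode_adjacent_cases[of "a + (k - 1)" m'] mm(3) by simp
    moreover have "smode (a + (k - 1) + 1) = smode (a + k)" using range_ge_2 by simp
    moreover have "smode (a + (k - 1) + (L - 1)) = smode (a + (k - 2))"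
      using smode_pred_shift[of "k - 1" a] range_ge_2 by (simp add: numeral_2_eq_2)
    moreover have "m' \<noteq> smode (a + k)"
    proof
      assume m': "m' = smode (a + k)"
      then have "G {} T = 0"
        using vanish_far[OF empty_in_configs Tc, of k a] mm(2,4) 2 ne ring_size by auto
      then show False using G by simp
    qed
    ultimately have m': "m' = smode (a + (k - 2))" by simp
    have "k \<noteq> 2"
    proof
      assume "k = 2"
      then show False using mm(2) m' by simp
    qed
    moreover have "T = {smode a, smode (a + (k - 2))}"
    proof -
      have "?Q - {m} = {smode a}" using 2 ne by (simp add: insert_Diff_if)
      then show ?thesis using mm(4) m' by (simp add: insert_commute)
    qed
    ultimately show ?thesis using range_ge_2 by simp
  qed
qed

lemma near_hops_sum:
  "(\<Sum>T\<in>hops L {smode a, smode (a + (k - 1))}. G {} T * hubbard L U T {smode a, smode (a + (k - 1))})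
   = (if 3 \<le> k then G {} {smode (a + 1), smode (a + (k - 1))}
                      * hubbard L U {smode (a + 1), smode (a + (k - 1))} {smode a, smode (a + (k - 1))}
                    + G {} {smode a, smode (a + (k - 2))}
                      * hubbard L U {smode a, smode (a + (k - 2))} {smode a, smode (a + (k - 1))}
      else 0)"
proof -
  let ?Q = "{smode a, smode (a + (k - 1))}"
  let ?T1 = "{smode (a + 1), smode (a + (k - 1))}" and ?T2 = "{smode a, smode (a + (k - 2))}"
  have Qc: "?Q \<in> configs L" using L_pos by (simp add: configs_def modes_def)
  have T1: "?T1 \<in> hops L ?Q" if "3 \<le> k"
  proof -
    have "smode (a + 1 + (k - 2)) \<noteq> smode (a + 1)"
      using smode_shift_neq[of "k - 2" "a + 1"] that ring_size by simp
    moreover have "a + 1 + (k - 2) = a + (k - 1)" using that by simp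
    ultimately have "smode (a + 1) \<noteq> smode (a + (k - 1))" by metis
    then have "insert (smode (a + 1)) (?Q - {smode a}) \<in> hops L ?Q"
      using adjacent_smode_succ[of a] smode_far_distinct(3)[of a] by (intro hopsI) auto
    then show ?thesis using smode_far_distinct(2)[of a] by (simp add: insert_Diff_if)
  qed
  have T2: "?T2 \<in> hops L ?Q" if "3 \<le> k"
  proof -
    have "smode (a + (k - 2)) \<noteq> smode a" using smode_shift_neq[of "k - 2" a] that ring_size by simp
    moreover have "smode (a + (k - 2)) \<noteq> smode (a + (k - 1))"
    proof -
      have "a + (k - 2) + 1 = a + (k - 1)" using that by simp
      then show ?thesis using smode_shift_neq[of 1 "a + (k - 2)"] L_gt_2
        by (metis less_trans one_less_numeral_iff semiring_norm(76) zero_less_one)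
    qed
    moreover have "adjacent_modes L (smode (a + (k - 1))) (smode (a + (k - 2)))"
      using adjacent_smode_pred[of "k - 1" a] that by (simp add: numeral_2_eq_2)
    ultimately have "insert (smode (a + (k - 2))) (?Q - {smode (a + (k - 1))}) \<in> hops L ?Q"
      by (intro hopsI) blast+
    moreover have "insert (smode (a + (k - 2))) (?Q - {smode (a + (k - 1))}) = ?T2"
      using smode_far_distinct(2)[of a] by blast
    ultimately show ?thesis by simp
  qed
  have "smode a \<notin> ?T1" using smode_far_distinct(2,3)[of a] by auto
  then have "?T1 \<noteq> ?T2" by blast
  have "(\<Sum>T\<in>hops L ?Q. G {} T * hubbard L U T ?Q)
      = (if 3 \<le> k then G {} ?T1 * hubbard L U ?T1 ?Q else 0) + (if 3 \<le> k then G {} ?T2 * hubbard L U ?T2 ?Q else 0)"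
  proof (rule sum_eq_two_candidates[OF finite_hops[OF Qc] \<open>?T1 \<noteq> ?T2\<close> T1 T2])
    fix T assume "T \<in> hops L ?Q" "G {} T * hubbard L U T ?Q \<noteq> 0"
    then show "(T = ?T1 \<and> 3 \<le> k) \<or> (T = ?T2 \<and> 3 \<le> k)"
      using near_hop_candidates[of T a] by auto
  qed
  then show ?thesis by simp
qed

lemma near_hop_terms:
  assumes "3 \<le> k"
  shows "G {} {smode (a + 1), smode (a + (k - 1))}
           * hubbard L U {smode (a + 1), smode (a + (k - 1))} {smode a, smode (a + (k - 1))}
         = -2 * pair_sign a (a + (k - 1)) * pair_amplitude (a + 1) (a + (k - 1))"
    and "G {} {smode a, smode (a + (k - 2))}
           * hubbard L U {smode a, smode (a + (k - 2))} {smode a, smode (a + (k - 1))}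
         = -2 * pair_sign a (a + (k - 1)) * pair_amplitude a (a + (k - 2))"
proof -
  have "(a + 1 + (k - 2)) mod L \<noteq> (a + 1) mod L"
    by (rule mod_add_neq) (use assms ring_size in linarith)+
  moreover have "a + 1 + (k - 2) = a + (k - 1)" using assms by simp
  ultimately have "(a + 1) mod L \<noteq> (a + (k - 1)) mod L" by (metis not_sym)
  then show "G {} {smode (a + 1), smode (a + (k - 1))}
           * hubbard L U {smode (a + 1), smode (a + (k - 1))} {smode a, smode (a + (k - 1))}
         = -2 * pair_sign a (a + (k - 1)) * pair_amplitude (a + 1) (a + (k - 1))"
    by (rule hop_pair_term[OF far_sites_distinct(2)[of a, THEN not_sym] _ adjacent_smode_succ[of a]])
  have ne: "(a + (k - 2)) mod L \<noteq> a mod L"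
    by (rule mod_add_neq) (use assms ring_size in linarith)+
  have "adjacent_modes L (smode (a + (k - 1))) (smode (a + (k - 2)))"
    using adjacent_smode_pred[of "k - 1" a] assms by (simp add: numeral_2_eq_2)
  then have "G {} {smode (a + (k - 2)), smode a} * hubbard L U {smode (a + (k - 2)), smode a} {smode (a + (k - 1)), smode a}
      = -2 * pair_sign (a + (k - 1)) a * pair_amplitude (a + (k - 2)) a"
    by (rule hop_pair_term[OF far_sites_distinct(2)[of a] ne])
  moreover have "pair_sign (a + (k - 1)) a * pair_amplitude (a + (k - 2)) a
      = pair_sign a (a + (k - 1)) * pair_amplitude a (a + (k - 2))"
    using pair_sign_swap[OF far_sites_distinct(2)[of a, THEN not_sym]] pair_amplitude_swap[OF ne[THEN not_sym]]
    by simp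
  ultimately show "G {} {smode a, smode (a + (k - 2))}
           * hubbard L U {smode a, smode (a + (k - 2))} {smode a, smode (a + (k - 1))}
         = -2 * pair_sign a (a + (k - 1)) * pair_amplitude a (a + (k - 2))"
    by (simp add: insert_commute)
qed

text \<open>This is where the interaction enters: the diagonal entry of the pair state lies \<open>4 U\<close> below
  that of the vacuum.\<close>

lemma near_pair_relation:
  "-4 * complex_of_real U * pair_amplitude a (a + (k - 1))
   = (if 3 \<le> k then 2 * (pair_amplitude (a + 1) (a + (k - 1)) + pair_amplitude a (a + (k - 2))) else 0)"
proof -
  let ?Q = "{smode a, smode (a + (k - 1))}" and ?H0 = "hubbard L U {} {}"
  have Qc: "?Q \<in> configs L" using L_pos by (simp add: configs_def modes_def)
  have "hops L {} = {}" by (simp add: hops_def)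
  then have comm: "G {} ?Q * hubbard L U ?Q ?Q + (\<Sum>T\<in>hops L ?Q. G {} T * hubbard L U T ?Q) = ?H0 * G {} ?Q"
    using commutes_hubbard_entry[OF commutes L_gt_2 empty_in_configs Qc] by simp
  have diag: "hubbard L U ?Q ?Q = ?H0 - 4 * complex_of_real U"
    using hubbard_diag_pair[OF L_gt_2, of "a mod L" "(a + (k - 1)) mod L" U \<sigma>] far_sites_distinct(2)[of a] L_pos
    by simp
  have "pair_sign a (a + (k - 1)) * (-4 * complex_of_real U * pair_amplitude a (a + (k - 1))
        - (if 3 \<le> k then 2 * (pair_amplitude (a + 1) (a + (k - 1)) + pair_amplitude a (a + (k - 2))) else 0)) = 0"
  proof (cases "3 \<le> k")
    case True
    then show ?thesis
      using comm[unfolded near_hops_sum near_hop_terms[OF True], unfolded diag vacuum_pair_entry]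
      by simp algebra
  next
    case False
    then show ?thesis
      using comm[unfolded near_hops_sum, unfolded diag vacuum_pair_entry] by auto
  qed
  then show ?thesis using pair_sign_nonzero by simp
qed

lemma vacuum_pair_zero:
  assumes "U \<noteq> 0"
  shows "G {} {smode a, smode (a + (k - 1))} = 0"
proof -
  define M where "M a = pair_amplitude a (a + (k - 1))" for a
  define N where "N a = pair_amplitude a (a + (k - 2))" for a
  have "M (Suc a) = - M a" for a
    using far_pair_relation[of a] range_ge_2 unfolding M_def by (simp add: eq_neg_iff_add_eq_0)
  moreover have "M (a + L) = M a" "N (a + L) = N a" for a
  proof -
    have "a + L + (k - 1) = a + (k - 1) + L" "a + L + (k - 2) = a + (k - 2) + L" by simp_all
    then show "M (a + L) = M a" "N (a + L) = N a"
      unfolding M_def N_def using pair_amplitude_period by metis+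
  qed
  moreover have "(-4 * complex_of_real U) * M a = (if 3 \<le> k then 2 * (N (Suc a) + N a) else 0)" for a
  proof -
    have "Suc a + (k - 2) = a + (k - 1)" using range_ge_2 by simp
    then have "N (Suc a) = pair_amplitude (a + 1) (a + (k - 1))"
      unfolding N_def by (simp only: Suc_eq_plus1)
    then show ?thesis unfolding M_def by (simp only:) (unfold N_def, rule near_pair_relation)
  qed
  moreover have "-4 * complex_of_real U \<noteq> 0" using assms by simp
  ultimately have "M a = 0" by (intro periodic_alternating_zero[OF L_pos]) blast+
  then show ?thesis unfolding M_def vacuum_pair_entry by simp
qed

lemma smode_in_window_iff: "p < L \<Longrightarrow> smode (a + p) \<in> window L k a \<longleftrightarrow> p < k"
proof
  assume p: "p < L" and "smode (a + p) \<in> window L k a"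
  then obtain q where q: "q < k" "(a + q) mod L = (a + p) mod L" unfolding window_def by auto
  moreover have "q < L" using q(1) ring_size by linarith
  ultimately have "q = p" using mod_add_cancel[OF q(2) _ p] by blast
  then show "p < k" using q(1) by simp
next
  assume "p < k"
  then show "smode (a + p) \<in> window L k a" unfolding window_def by blast
qed

lemma windows_disjoint: "window L k a \<inter> window L k (a + k) = {}"
proof (intro equals0I)
  fix m assume "m \<in> window L k a \<inter> window L k (a + k)"
  then have "m \<in> window L k a" "m \<in> window L k (a + k)" by simp_all
  then obtain p q \<tau> \<tau>' where pq: "p < k" "q < k"
    and m: "m = ((a + p) mod L, \<tau>)" "m = ((a + k + q) mod L, \<tau>')"
    unfolding window_def by blast
  then have "(a + p) mod L = (a + (k + q)) mod L" by (simp add: add.assoc)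
  moreover have "p < L" "k + q < L" using pq ring_size by linarith+
  ultimately have "p = k + q" by (rule mod_add_cancel)
  then show False using pq by simp
qed

definition left_block :: "nat \<Rightarrow> mode set" where
  "left_block a = window L k a - {smode (a + (k - 1))}"

lemma smode_in_left_block_iff: "p < L \<Longrightarrow> smode (a + p) \<in> left_block a \<longleftrightarrow> p < k - 1"
proof -
  assume p: "p < L"
  have "k - 1 < L" using ring_size by linarith
  then have "smode (a + p) = smode (a + (k - 1)) \<longleftrightarrow> p = k - 1"
    using mod_add_cancel[of a p L "k - 1"] p by blast
  moreover have "p < k - 1 \<longleftrightarrow> p < k \<and> p \<noteq> k - 1" using range_ge_2 by linarith
  ultimately show ?thesis
    unfolding left_block_def using smode_in_window_iff[OF p, of a] by blast
qed

lemma shift_left_left_block: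
  assumes Y: "Y \<in> configs L" "Y \<subseteq> left_block a" and j: "j < k"
  shows "shift_left (a + j) Y \<in> configs L \<and> shift_left (a + j) Y \<subseteq> left_block a
       \<and> smode (a + j + 1) \<notin> shift_left (a + j) Y"
proof (cases "smode (a + j + 1) \<in> Y")
  case True
  have jL: "j < L" "j + 1 < L" using j ring_size by linarith+
  have "smode (a + j + 1) \<in> left_block a" using True Y(2) by blast
  then have "smode (a + (j + 1)) \<in> left_block a" by (simp only: add.assoc)
  then have "j + 1 < k - 1" using smode_in_left_block_iff[OF jL(2)] by blast
  then have "smode (a + j) \<in> left_block a" using smode_in_left_block_iff[OF jL(1)] by simp
  moreover have "smode (a + j + 1) \<noteq> smode (a + j)" using smode_shift_neq[of 1 "a + j"] L_gt_2 by simp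
  moreover have "insert (smode (a + j)) (Y - {smode (a + j + 1)}) \<in> configs L"
    using Y(1) L_pos by (auto simp: configs_def modes_def)
  ultimately show ?thesis using True Y(2) unfolding shift_left_def by auto
next
  case False
  then show ?thesis using Y unfolding shift_left_def by simp
qed

lemma smode_shifted_outside_left_block:
  assumes "Z \<subseteq> left_block a" "j < k"
  shows "smode (a + j + k) \<notin> Z"
proof
  assume "smode (a + j + k) \<in> Z"
  then have "smode (a + (j + k)) \<in> window L k a"
    using assms(1) unfolding left_block_def by (auto simp: add.assoc)
  moreover have "j + k < L" using assms(2) ring_size by linarith
  ultimately show False using smode_in_window_iff by simp
qed

text \<open>Shifting the pair to the right, while pushing the particles met on the way to the left,
  keeps all particles in the left block and preserves the vanishing of the amplitude.\<close>

lemma pair_shift_chain: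
  assumes X: "X \<in> configs L" "X \<subseteq> left_block a" "smode a \<notin> X"
    and "j \<le> k"
  shows "\<exists>Y. Y \<in> configs L \<and> Y \<subseteq> left_block a \<and> smode (a + j) \<notin> Y \<and> smode (a + j + (k - 1)) \<notin> Y
           \<and> (G X (insert (smode a) (insert (smode (a + (k - 1))) X)) = 0
              \<longleftrightarrow> G Y (insert (smode (a + j)) (insert (smode (a + j + (k - 1))) Y)) = 0)"
  using \<open>j \<le> k\<close>
proof (induction j)
  case 0
  have "smode (a + (k - 1)) \<notin> X" using X(2) unfolding left_block_def by blast
  then show ?case using X by auto
next
  case (Suc j)
  then obtain Y where Y: "Y \<in> configs L" "Y \<subseteq> left_block a" "smode (a + j) \<notin> Y"
    "smode (a + j + (k - 1)) \<notin> Y"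
    "G X (insert (smode a) (insert (smode (a + (k - 1))) X)) = 0
     \<longleftrightarrow> G Y (insert (smode (a + j)) (insert (smode (a + j + (k - 1))) Y)) = 0"
    by auto
  have j: "j < k" using Suc.prems by simp
  have ind: "a + j + 1 = a + Suc j" "a + j + k = a + Suc j + (k - 1)" using range_ge_2 by simp_all
  have "G Y (insert (smode (a + j)) (insert (smode (a + j + (k - 1))) Y)) = 0
     \<longleftrightarrow> G (shift_left (a + j) Y)
           (insert (smode (a + Suc j)) (insert (smode (a + Suc j + (k - 1))) (shift_left (a + j) Y))) = 0"
    using pair_shift_step[OF Y(1,3,4) smode_shifted_outside_left_block[OF Y(2) j]] unfolding ind .
  moreover have "shift_left (a + j) Y \<in> configs L" "shift_left (a + j) Y \<subseteq> left_block a"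
    "smode (a + Suc j) \<notin> shift_left (a + j) Y"
    using shift_left_left_block[OF Y(1,2) j] unfolding ind by auto
  moreover have "smode (a + Suc j + (k - 1)) \<notin> shift_left (a + j) Y"
    using smode_shifted_outside_left_block[OF \<open>shift_left (a + j) Y \<subseteq> left_block a\<close> j] unfolding ind .
  ultimately show ?case using Y(5) by blast
qed

text \<open>After \<open>k\<close> shifts the pair has left the window of \<open>X\<close>, and the amplitude reduces to the
  vacuum one.\<close>

lemma pair_amplitude_zero:
  assumes U: "U \<noteq> 0"
    and window_reduction: "\<And>a X. X \<in> configs L \<Longrightarrow> smode a \<notin> X \<Longrightarrow> smode (a + (k - 1)) \<notin> X \<Longrightarrow>
        G X (insert (smode a) (insert (smode (a + (k - 1))) X)) = 0
        \<longleftrightarrow> G (X \<inter> window L k a) (insert (smode a) (insert (smode (a + (k - 1))) (X \<inter> window L k a))) = 0"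
    and X: "X \<in> configs L" "smode a \<notin> X" "smode (a + (k - 1)) \<notin> X"
  shows "G X (insert (smode a) (insert (smode (a + (k - 1))) X)) = 0"
proof -
  let ?X0 = "X \<inter> window L k a"
  have "?X0 \<in> configs L" using X(1) unfolding configs_def by auto
  moreover have "?X0 \<subseteq> left_block a" using X(3) unfolding left_block_def by blast
  ultimately obtain Y where Y: "Y \<in> configs L" "Y \<subseteq> left_block a" "smode (a + k) \<notin> Y"
    "smode (a + k + (k - 1)) \<notin> Y"
    "G ?X0 (insert (smode a) (insert (smode (a + (k - 1))) ?X0)) = 0
     \<longleftrightarrow> G Y (insert (smode (a + k)) (insert (smode (a + k + (k - 1))) Y)) = 0"
    using pair_shift_chain[of ?X0 a k] X(2) by blast
  have "Y \<inter> window L k (a + k) = {}"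
    using Y(2) windows_disjoint[of a] unfolding left_block_def by blast
  then have "G Y (insert (smode (a + k)) (insert (smode (a + k + (k - 1))) Y)) = 0"
    using window_reduction[OF Y(1,3,4)] vacuum_pair_zero[OF U, of "a + k"] by simp
  then show ?thesis
    using Y(5) window_reduction[OF X] by simp
qed

end

section \<open>The coefficient of an end word\<close>

lemma letter_UNIV: "(UNIV :: letter set) = {LC, LCd, LZ, LI}"
  by (auto intro: letter.exhaust)

lemma finite_basis_words: "finite (basis_words k)"
proof -
  let ?W = "{g :: nat \<times> bool \<Rightarrow> letter. \<forall>x. (x \<in> {..<k} \<times> UNIV \<longrightarrow> g x \<in> UNIV)
                                          \<and> (x \<notin> {..<k} \<times> UNIV \<longrightarrow> g x = LI)}"
  have "finite ?W"
    by (rule finite_set_of_finite_funs) (simp_all add: letter_UNIV)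
  then have "finite (curry ` ?W)" by (rule finite_imageI)
  moreover have "basis_words k \<subseteq> curry ` ?W"
  proof
    fix f assume "f \<in> basis_words k"
    then have "case_prod f \<in> ?W" unfolding basis_words_def by (simp add: split_paired_all not_less)
    then show "f \<in> curry ` ?W" by (rule image_eqI[where x = "case_prod f", rotated]) simp
  qed
  ultimately show ?thesis by (rule finite_subset[rotated])
qed

lemma sum_Pow_prod_z_value:
  assumes "finite M0" "Z \<subseteq> M0" "Z \<noteq> {}"
  shows "(\<Sum>X\<in>Pow M0. \<Prod>m\<in>Z. z_value m X) = 0"
proof -
  obtain m0 where m0: "m0 \<in> Z" using assms by auto
  define M1 where "M1 = M0 - {m0}"
  have M0e: "M0 = insert m0 M1" and nm: "m0 \<notin> M1" using m0 assms unfolding M1_def by auto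
  have f1: "finite M1" using assms unfolding M1_def by auto
  have fZ: "finite Z" using assms finite_subset by auto
  have Pe: "Pow M0 = Pow M1 \<union> insert m0 ` Pow M1" unfolding M0e by (rule Pow_insert)
  have disj: "Pow M1 \<inter> insert m0 ` Pow M1 = {}" using nm by auto
  have inj: "inj_on (insert m0) (Pow M1)"
  proof (rule inj_onI)
    fix x y assume x: "x \<in> Pow M1" and y: "y \<in> Pow M1" and e: "insert m0 x = insert m0 y"
    have "m0 \<notin> x" "m0 \<notin> y" using x y nm by auto
    then show "x = y" using e by (metis Diff_insert_absorb)
  qed
  have flip: "(\<Prod>m\<in>Z. z_value m (insert m0 X)) = - (\<Prod>m\<in>Z. z_value m X)" if X: "X \<in> Pow M1" for X
  proof -
    have m0X: "m0 \<notin> X" using X nm by auto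
    have "(\<Prod>m\<in>Z. z_value m (insert m0 X)) = z_value m0 (insert m0 X) * (\<Prod>m\<in>Z - {m0}. z_value m (insert m0 X))"
      using fZ m0 by (simp add: prod.remove)
    also have "(\<Prod>m\<in>Z - {m0}. z_value m (insert m0 X)) = (\<Prod>m\<in>Z - {m0}. z_value m X)"
      by (rule prod.cong) (auto simp: z_value_def)
    also have "(\<Prod>m\<in>Z. z_value m X) = z_value m0 X * (\<Prod>m\<in>Z - {m0}. z_value m X)"
      using fZ m0 by (simp add: prod.remove)
    ultimately show ?thesis using m0X by (simp add: z_value_def)
  qed
  have "(\<Sum>X\<in>Pow M0. \<Prod>m\<in>Z. z_value m X) = (\<Sum>X\<in>Pow M1. \<Prod>m\<in>Z. z_value m X) + (\<Sum>X\<in>insert m0 ` Pow M1. \<Prod>m\<in>Z. z_value m X)"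
    unfolding Pe using f1 disj by (simp add: sum.union_disjoint)
  also have "(\<Sum>X\<in>insert m0 ` Pow M1. \<Prod>m\<in>Z. z_value m X) = (\<Sum>X\<in>Pow M1. \<Prod>m\<in>Z. z_value m (insert m0 X))"
    by (rule sum.reindex[OF inj, unfolded comp_def])
  also have "\<dots> = (\<Sum>X\<in>Pow M1. - (\<Prod>m\<in>Z. z_value m X))"
    by (rule sum.cong) (auto simp: flip)
  finally show ?thesis by (simp add: sum_negf)
qed

lemma list_all2_basis_word_list:
  assumes "\<And>p \<tau>. p < l \<Longrightarrow> R (g p \<tau>) (h p \<tau>)"
  shows "list_all2 (\<lambda>x y. snd y = snd x \<and> R (fst x) (fst y)) (basis_word_list L l i g) (basis_word_list L l i h)"
  unfolding basis_word_list_def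
  by (rule list_all2_appendI) (auto simp: list_all2_map1 list_all2_map2 list_all2_same assms)

text \<open>The coefficient of the end word sits in the matrix elements between \<open>X\<close> and
  \<open>X \<union> {a, a + k - 1}\<close> of \<open>F\<close> (for \<open>c c\<close>) or of its transpose (for \<open>c\<^sup>\<dagger> c\<^sup>\<dagger>\<close>).\<close>

definition pair_op ::
    "nat \<Rightarrow> nat \<Rightarrow> (nat \<Rightarrow> nat \<Rightarrow> (nat \<Rightarrow> bool \<Rightarrow> letter) \<Rightarrow> complex) \<Rightarrow> bool \<Rightarrow> fop" where
  "pair_op L k coef s = (if s then (\<lambda>S' S. local_op L k coef S S') else local_op L k coef)"

lemma k_local_pair_op: "0 < L \<Longrightarrow> k_local L k (pair_op L k coef s)"
  using k_local_local_op k_local_transpose unfolding pair_op_def by auto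

lemma commutes_pair_op:
  "is_k_local_conserved L U k coef \<Longrightarrow> 0 < L \<Longrightarrow> commutes L (pair_op L k coef s) (hubbard L U)"
  using commutes_hubbard_transpose unfolding is_k_local_conserved_def pair_op_def by auto

locale end_pair_word =
  fixes L k :: nat and coef :: "nat \<Rightarrow> nat \<Rightarrow> (nat \<Rightarrow> bool \<Rightarrow> letter) \<Rightarrow> complex"
    and a :: nat and \<sigma> s :: bool
  assumes ring_size: "2 * k \<le> L" and range_ge_2: "2 \<le> k" and start: "a < L"
begin

definition first_mode :: mode where
  "first_mode = (a, \<sigma>)"
definition last_mode :: mode where
  "last_mode = ((a + (k - 1)) mod L, \<sigma>)"
definition end_letter :: letter where
  "end_letter = (if s then LCd else LC)"

text \<open>The end word maps \<open>pair_source X\<close> to \<open>pair_target X\<close>: \<open>c c\<close> removes the pair,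
  \<open>c\<^sup>\<dagger> c\<^sup>\<dagger>\<close> (\<open>s = True\<close>) adds it.\<close>

definition pair_source :: "mode set \<Rightarrow> mode set" where
  "pair_source X = (if s then X else insert first_mode (insert last_mode X))"
definition pair_target :: "mode set \<Rightarrow> mode set" where
  "pair_target X = (if s then insert first_mode (insert last_mode X) else X)"

definition end_shaped :: "(nat \<Rightarrow> bool \<Rightarrow> letter) \<Rightarrow> bool" where
  "end_shaped f \<longleftrightarrow> (\<forall>p \<tau>. k \<le> p \<longrightarrow> f p \<tau> = LI) \<and> f 0 \<sigma> = end_letter \<and> f (k - 1) \<sigma> = end_letter
   \<and> (\<forall>p<k. \<forall>\<tau>. (p, \<tau>) \<noteq> (0, \<sigma>) \<and> (p, \<tau>) \<noteq> (k - 1, \<sigma>) \<longrightarrow> f p \<tau> = LZ \<or> f p \<tau> = LI)"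

definition z_modes :: "(nat \<Rightarrow> bool \<Rightarrow> letter) \<Rightarrow> mode set" where
  "z_modes f = {m. (LZ, m) \<in> set (basis_word_list L k a f)}"

lemma L_pos: "0 < L"
  using ring_size range_ge_2 by linarith

lemma modes_first_last: "first_mode \<in> modes L" "last_mode \<in> modes L"
  unfolding first_mode_def last_mode_def modes_def using start L_pos by auto

lemma first_last_distinct: "first_mode \<noteq> last_mode"
proof -
  have "(a + (k - 1)) mod L \<noteq> a mod L" by (rule mod_add_neq) (use ring_size range_ge_2 in auto)
  then show ?thesis unfolding first_mode_def last_mode_def using start by auto
qed

lemma window_first_iff: "((a + p) mod L, \<tau>) = first_mode \<longleftrightarrow> p = 0 \<and> \<tau> = \<sigma>" if "p < k" for p \<tau>
proof
  assume e: "((a + p) mod L, \<tau>) = first_mode"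
  then have "(a + p) mod L = (a + 0) mod L" "\<tau> = \<sigma>" unfolding first_mode_def using start by auto
  then show "p = 0 \<and> \<tau> = \<sigma>" using mod_add_cancel[of a p L 0] that ring_size range_ge_2 by auto
next
  assume "p = 0 \<and> \<tau> = \<sigma>" then show "((a + p) mod L, \<tau>) = first_mode" unfolding first_mode_def using start by simp
qed

lemma window_last_iff: "((a + p) mod L, \<tau>) = last_mode \<longleftrightarrow> p = k - 1 \<and> \<tau> = \<sigma>" if "p < k" for p \<tau>
proof
  assume e: "((a + p) mod L, \<tau>) = last_mode"
  then have "(a + p) mod L = (a + (k - 1)) mod L" "\<tau> = \<sigma>" unfolding last_mode_def by auto
  then show "p = k - 1 \<and> \<tau> = \<sigma>" using mod_add_cancel[of a p L "k - 1"] that ring_size range_ge_2 by auto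
next
  assume "p = k - 1 \<and> \<tau> = \<sigma>" then show "((a + p) mod L, \<tau>) = last_mode" unfolding last_mode_def by simp
qed

lemma pair_source_configs: "X \<in> configs L \<Longrightarrow> pair_source X \<in> configs L"
  unfolding pair_source_def using modes_first_last by (auto simp: configs_def)

lemma end_shaped_if_maps_pair:
  assumes X: "X \<in> configs L" "first_mode \<notin> X" "last_mode \<notin> X"
    and f: "\<forall>p \<tau>. k \<le> p \<longrightarrow> f p \<tau> = LI"
    and action: "word_action (basis_word_list L k a f) (pair_source X) = Some (pair_target X, c)"
  shows "end_shaped f"
proof -
  have dist: "distinct (map snd (basis_word_list L k a f))"
    by (rule distinct_basis_word_list) (use ring_size in linarith)
  have letters: "(e = LC \<longrightarrow> m \<in> pair_source X \<and> m \<notin> pair_target X)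
      \<and> (e = LCd \<longrightarrow> m \<notin> pair_source X \<and> m \<in> pair_target X)
      \<and> (e = LZ \<or> e = LI \<longrightarrow> (m \<in> pair_target X \<longleftrightarrow> m \<in> pair_source X))"
    if "(e, m) \<in> set (basis_word_list L k a f)" for e m
    using word_action_letters[OF dist action that] .
  have inset: "(f p \<tau>, ((a + p) mod L, \<tau>)) \<in> set (basis_word_list L k a f)" if "p < k" for p \<tau>
    using set_basis_word_list that by blast
  have first_letter: "f 0 \<sigma> = end_letter"
  proof -
    have m: "((a + 0) mod L, \<sigma>) = first_mode" using window_first_iff[of 0 \<sigma>] range_ge_2 by simp
    show ?thesis using letters[OF inset[of 0 \<sigma>]] range_ge_2 X unfolding m
      by (cases "f 0 \<sigma>") (auto simp: end_letter_def pair_source_def pair_target_def split: if_splits)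
  qed
  have last_letter: "f (k - 1) \<sigma> = end_letter"
  proof -
    have m: "((a + (k - 1)) mod L, \<sigma>) = last_mode" unfolding last_mode_def by simp
    show ?thesis using letters[OF inset[of "k - 1" \<sigma>]] range_ge_2 X first_last_distinct unfolding m
      by (cases "f (k - 1) \<sigma>") (auto simp: end_letter_def pair_source_def pair_target_def split: if_splits)
  qed
  have middle_letters: "f p \<tau> = LZ \<or> f p \<tau> = LI"
    if "p < k" "(p, \<tau>) \<noteq> (0, \<sigma>)" "(p, \<tau>) \<noteq> (k - 1, \<sigma>)" for p \<tau>
  proof -
    have "((a + p) mod L, \<tau>) \<noteq> first_mode" "((a + p) mod L, \<tau>) \<noteq> last_mode"
      using window_first_iff[OF that(1)] window_last_iff[OF that(1)] that by auto
    then have "(((a + p) mod L, \<tau>) \<in> pair_target X) = (((a + p) mod L, \<tau>) \<in> pair_source X)"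
      unfolding pair_source_def pair_target_def by auto
    then show ?thesis using letters[OF inset[OF that(1), of \<tau>]] by (cases "f p \<tau>") auto
  qed
  show ?thesis unfolding end_shaped_def using f first_letter last_letter middle_letters by blast
qed

lemma local_op_term_shape:
  assumes X: "X \<in> configs L" "first_mode \<notin> X" "last_mode \<notin> X"
    and l: "l \<le> k" and i: "i < L" and f: "f \<in> basis_words l"
    and ne: "basis_elem L l i f (pair_target X) (pair_source X) \<noteq> 0"
  shows "l = k \<and> i = a \<and> end_shaped f"
proof -
  obtain c where action: "word_action (basis_word_list L l i f) (pair_source X) = Some (pair_target X, c)"
    using ne basis_elem_entry[OF L_pos pair_source_configs[OF X(1)]]
    by (auto simp: action_entry_def split: option.splits if_splits)
  have "(first_mode \<in> pair_target X) \<noteq> (first_mode \<in> pair_source X)"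
    "(last_mode \<in> pair_target X) \<noteq> (last_mode \<in> pair_source X)"
    using X first_last_distinct unfolding pair_source_def pair_target_def by auto
  then have "first_mode \<in> window L l i" "last_mode \<in> window L l i"
    using basis_elem_support[OF L_pos pair_source_configs[OF X(1)] ne] by auto
  then have window: "l = k \<and> i = a"
    using window_ends[OF start i l ring_size] unfolding first_mode_def last_mode_def by blast
  moreover have "\<forall>p \<tau>. k \<le> p \<longrightarrow> f p \<tau> = LI" using f window unfolding basis_words_def by auto
  ultimately show ?thesis using end_shaped_if_maps_pair[OF X] action by blast
qed

lemma end_word_in_basis_words: "end_word k \<sigma> s \<in> basis_words k"
  unfolding end_word_def basis_words_def using ring_size range_ge_2 by auto

lemma end_shaped_end_word: "end_shaped (end_word k \<sigma> s)"
  unfolding end_shaped_def end_word_def end_letter_def using ring_size range_ge_2 by auto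

lemma basis_elem_end_shaped:
  assumes "end_shaped f" and that: "X \<in> configs L"
  shows "basis_elem L k a f (pair_target X) (pair_source X) = basis_elem L k a (end_word k \<sigma> s) (pair_target X) (pair_source X) * (\<Prod>m\<in>z_modes f. z_value m (pair_source X))"
proof -
  have rel: "list_all2 (\<lambda>x y. snd y = snd x \<and> (fst y = fst x \<or> (fst x = LI \<and> fst y = LZ))) (basis_word_list L k a (end_word k \<sigma> s)) (basis_word_list L k a f)"
  proof (rule list_all2_basis_word_list)
    fix p \<tau> assume p: "p < k"
    show "f p \<tau> = end_word k \<sigma> s p \<tau> \<or> (end_word k \<sigma> s p \<tau> = LI \<and> f p \<tau> = LZ)"
    proof (cases "(p, \<tau>) = (0, \<sigma>) \<or> (p, \<tau>) = (k - 1, \<sigma>)")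
      case True
      then show ?thesis using assms unfolding end_shaped_def end_word_def end_letter_def by auto
    next
      case False
      then have "f p \<tau> = LZ \<or> f p \<tau> = LI" using assms p unfolding end_shaped_def by auto
      moreover have "end_word k \<sigma> s p \<tau> = LI" using False unfolding end_word_def by auto
      ultimately show ?thesis by auto
    qed
  qed
  have dist: "distinct (map snd (basis_word_list L k a (end_word k \<sigma> s)))" by (rule distinct_basis_word_list) (use ring_size range_ge_2 in auto)
  have noZ: "\<forall>x\<in>set (basis_word_list L k a (end_word k \<sigma> s)). fst x \<noteq> LZ"
    unfolding basis_word_list_def end_word_def by (auto split: if_splits)
  have "word_action (basis_word_list L k a f) (pair_source X) = map_option (\<lambda>(T, c). (T, c * (\<Prod>m\<in>z_modes f. z_value m (pair_source X)))) (word_action (basis_word_list L k a (end_word k \<sigma> s)) (pair_source X))"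
    using word_action_I_to_Z[OF rel dist noZ] unfolding z_modes_def .
  then show ?thesis unfolding basis_elem_entry[OF L_pos pair_source_configs[OF that]]
    by (auto simp: action_entry_def split: option.splits)
qed

lemma end_word_letter_modes:
  assumes "e = LC \<or> e = LCd"
  shows "(e, m) \<in> set (basis_word_list L k a (end_word k \<sigma> s))
     \<longleftrightarrow> e = end_letter \<and> (m = first_mode \<or> m = last_mode)"
proof
  assume "(e, m) \<in> set (basis_word_list L k a (end_word k \<sigma> s))"
  then obtain p \<tau> where p: "p < k" "m = ((a + p) mod L, \<tau>)" "e = end_word k \<sigma> s p \<tau>"
    using set_basis_word_list by blast
  then have "\<tau> = \<sigma> \<and> (p = 0 \<or> p = k - 1) \<and> e = end_letter"
    using assms unfolding end_word_def end_letter_def by (auto split: if_splits)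
  then show "e = end_letter \<and> (m = first_mode \<or> m = last_mode)"
    using p window_first_iff window_last_iff by auto
next
  assume e: "e = end_letter \<and> (m = first_mode \<or> m = last_mode)"
  have ends: "end_word k \<sigma> s 0 \<sigma> = end_letter" "end_word k \<sigma> s (k - 1) \<sigma> = end_letter"
    unfolding end_word_def end_letter_def by simp_all
  have "0 < k" "k - 1 < k" using range_ge_2 by simp_all
  then have "first_mode = ((a + 0) mod L, \<sigma>)" "last_mode = ((a + (k - 1)) mod L, \<sigma>)"
    using window_first_iff[of 0 \<sigma>] window_last_iff[of "k - 1" \<sigma>] by simp_all
  then have "(end_letter, first_mode) \<in> set (basis_word_list L k a (end_word k \<sigma> s))"
    "(end_letter, last_mode) \<in> set (basis_word_list L k a (end_word k \<sigma> s))"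
    unfolding set_basis_word_list using ends \<open>0 < k\<close> \<open>k - 1 < k\<close> by metis+
  then show "(e, m) \<in> set (basis_word_list L k a (end_word k \<sigma> s))" using e by auto
qed

lemma end_word_entry_unit:
  assumes X: "X \<in> configs L" "first_mode \<notin> X" "last_mode \<notin> X"
  shows "basis_elem L k a (end_word k \<sigma> s) (pair_target X) (pair_source X) = 1
       \<or> basis_elem L k a (end_word k \<sigma> s) (pair_target X) (pair_source X) = -1"
proof -
  let ?w = "basis_word_list L k a (end_word k \<sigma> s)"
  have dist: "distinct (map snd ?w)"
    by (rule distinct_basis_word_list) (use ring_size in linarith)
  have LC: "(LC, m) \<in> set ?w \<longleftrightarrow> \<not> s \<and> (m = first_mode \<or> m = last_mode)" for m
    using end_word_letter_modes[of LC m] unfolding end_letter_def by (cases s) simp_all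
  have LCd: "(LCd, m) \<in> set ?w \<longleftrightarrow> s \<and> (m = first_mode \<or> m = last_mode)" for m
    using end_word_letter_modes[of LCd m] unfolding end_letter_def by (cases s) simp_all
  have "(e = LC \<longrightarrow> m \<in> pair_source X) \<and> (e = LCd \<longrightarrow> m \<notin> pair_source X)"
    if "(e, m) \<in> set ?w" for e m
    using that LC[of m] LCd[of m] X unfolding pair_source_def by (cases e) auto
  then have "\<forall>(e, m)\<in>set ?w. (e = LC \<longrightarrow> m \<in> pair_source X) \<and> (e = LCd \<longrightarrow> m \<notin> pair_source X)"
    by fast
  then obtain c where "word_action ?w (pair_source X)
      = Some ((pair_source X - {m. (LC, m) \<in> set ?w}) \<union> {m. (LCd, m) \<in> set ?w}, c)"
    using word_action_defined[OF dist] by blast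
  moreover have "(pair_source X - {m. (LC, m) \<in> set ?w}) \<union> {m. (LCd, m) \<in> set ?w} = pair_target X"
    using X first_last_distinct unfolding LC LCd pair_source_def pair_target_def by auto
  ultimately have "word_action ?w (pair_source X) = Some (pair_target X, c)" by simp
  then show ?thesis
    unfolding basis_elem_entry[OF L_pos pair_source_configs[OF X(1)]]
    using word_action_sign by (auto simp: action_entry_def)
qed

definition z_weighted_coef :: "mode set \<Rightarrow> complex" where
  "z_weighted_coef X = (\<Sum>f\<in>basis_words k. (if end_shaped f then coef k a f * (\<Prod>m\<in>z_modes f. z_value m (pair_source X)) else 0))"

lemma local_op_pair_entry:
  assumes X: "X \<in> configs L" "first_mode \<notin> X" "last_mode \<notin> X"
  shows "local_op L k coef (pair_target X) (pair_source X) = basis_elem L k a (end_word k \<sigma> s) (pair_target X) (pair_source X) * z_weighted_coef X"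
proof -
  define g where "g l i = (\<Sum>f\<in>basis_words l. coef l i f * basis_elem L l i f (pair_target X) (pair_source X))" for l i
  have g0: "g l i = 0" if "l \<in> {1..k}" "i < L" "\<not> (l = k \<and> i = a)" for l i
    unfolding g_def
  proof (rule sum.neutral, rule ballI)
    fix f assume f: "f \<in> basis_words l"
    show "coef l i f * basis_elem L l i f (pair_target X) (pair_source X) = 0"
      using local_op_term_shape[OF X _ that(2) f] that by fastforce
  qed
  have "local_op L k coef (pair_target X) (pair_source X) = (\<Sum>l\<in>{1..k}. \<Sum>i<L. g l i)"
    unfolding local_op_def g_def by simp
  also have "\<dots> = (\<Sum>l\<in>{1..k}. \<Sum>i<L. (if l = k then (if i = a then g k a else 0) else 0))"
    by (rule sum.cong[OF refl], rule sum.cong[OF refl]) (use g0 in auto)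
  also have "\<dots> = (\<Sum>l\<in>{1..k}. (if l = k then g k a else 0))"
  proof (rule sum.cong[OF refl])
    fix l show "(\<Sum>i<L. (if l = k then (if i = a then g k a else 0) else 0)) = (if l = k then g k a else 0)"
      using start by (cases "l = k") simp_all
  qed
  also have "\<dots> = g k a" using ring_size range_ge_2 by simp
  also have "\<dots> = (\<Sum>f\<in>basis_words k. (if end_shaped f then basis_elem L k a (end_word k \<sigma> s) (pair_target X) (pair_source X)
                     * (coef k a f * (\<Prod>m\<in>z_modes f. z_value m (pair_source X))) else 0))"
    unfolding g_def
  proof (rule sum.cong[OF refl])
    fix f assume f: "f \<in> basis_words k"
    show "coef k a f * basis_elem L k a f (pair_target X) (pair_source X) = (if end_shaped f then basis_elem L k a (end_word k \<sigma> s) (pair_target X) (pair_source X)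
                     * (coef k a f * (\<Prod>m\<in>z_modes f. z_value m (pair_source X))) else 0)"
    proof (cases "end_shaped f")
      case True
      then show ?thesis using basis_elem_end_shaped[OF True X(1)] by simp
    next
      case False
      have "basis_elem L k a f (pair_target X) (pair_source X) = 0"
        using local_op_term_shape[OF X _ start f] False range_ge_2 by fastforce
      then show ?thesis using False by simp
    qed
  qed
  also have "\<dots> = basis_elem L k a (end_word k \<sigma> s) (pair_target X) (pair_source X) * z_weighted_coef X"
    unfolding z_weighted_coef_def sum_distrib_left by (rule sum.cong) auto
  finally show ?thesis .
qed

lemma z_modes_subset:
  assumes "end_shaped f" "m \<in> z_modes f"
  shows "m \<in> window L k a \<and> m \<noteq> first_mode \<and> m \<noteq> last_mode"
proof -
  have "(LZ, m) \<in> set (basis_word_list L k a f)" using assms unfolding z_modes_def by simp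
  then obtain p \<tau> where p: "p < k" "m = ((a + p) mod L, \<tau>)" "LZ = f p \<tau>" using set_basis_word_list by blast
  have "m \<in> window L k a" unfolding window_def using p by auto
  moreover have "m \<noteq> first_mode"
  proof
    assume "m = first_mode"
    then have "p = 0 \<and> \<tau> = \<sigma>" using window_first_iff[OF p(1)] p by simp
    then show False using assms(1) p unfolding end_shaped_def end_letter_def by (auto split: if_splits)
  qed
  moreover have "m \<noteq> last_mode"
  proof
    assume "m = last_mode"
    then have "p = k - 1 \<and> \<tau> = \<sigma>" using window_last_iff[OF p(1)] p by simp
    then show False using assms(1) p unfolding end_shaped_def end_letter_def by (auto split: if_splits)
  qed
  ultimately show ?thesis by simp
qed

lemma local_op_pair_entry_window:
  assumes X: "X \<in> configs L" "first_mode \<notin> X" "last_mode \<notin> X"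
  shows "local_op L k coef (pair_target X) (pair_source X) = 0
     \<longleftrightarrow> local_op L k coef (pair_target (X \<inter> window L k a)) (pair_source (X \<inter> window L k a)) = 0"
proof -
  let ?X1 = "X \<inter> window L k a"
  have X1: "?X1 \<in> configs L" "first_mode \<notin> ?X1" "last_mode \<notin> ?X1" using X unfolding configs_def by auto
  have P: "z_weighted_coef X = z_weighted_coef ?X1"
    unfolding z_weighted_coef_def
  proof (rule sum.cong[OF refl])
    fix f assume f: "f \<in> basis_words k"
    have "(\<Prod>m\<in>z_modes f. z_value m (pair_source X)) = (\<Prod>m\<in>z_modes f. z_value m (pair_source ?X1))" if "end_shaped f"
    proof (rule prod.cong[OF refl])
      fix m assume "m \<in> z_modes f"
      then have "m \<in> window L k a" "m \<noteq> first_mode" "m \<noteq> last_mode" using z_modes_subset[OF that] by auto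
      then show "z_value m (pair_source X) = z_value m (pair_source ?X1)" unfolding z_value_def pair_source_def by auto
    qed
    then show "(if end_shaped f then coef k a f * (\<Prod>m\<in>z_modes f. z_value m (pair_source X)) else 0)
        = (if end_shaped f then coef k a f * (\<Prod>m\<in>z_modes f. z_value m (pair_source ?X1)) else 0)" by simp
  qed
  have n1: "basis_elem L k a (end_word k \<sigma> s) (pair_target X) (pair_source X) \<noteq> 0" using end_word_entry_unit[OF X] by auto
  have n2: "basis_elem L k a (end_word k \<sigma> s) (pair_target ?X1) (pair_source ?X1) \<noteq> 0" using end_word_entry_unit[OF X1] by auto
  show ?thesis unfolding local_op_pair_entry[OF X] local_op_pair_entry[OF X1] using n1 n2 P by simp
qed

lemma z_modes_end_word: "z_modes (end_word k \<sigma> s) = {}"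
  unfolding z_modes_def basis_word_list_def end_word_def by (auto split: if_splits)

lemma z_modes_nonempty:
  assumes "end_shaped f" "f \<noteq> end_word k \<sigma> s"
  shows "z_modes f \<noteq> {}"
proof -
  obtain p \<tau> where ne: "f p \<tau> \<noteq> end_word k \<sigma> s p \<tau>" using assms(2) by (metis ext)
  have p: "p < k"
  proof (rule ccontr)
    assume "\<not> p < k"
    then have "f p \<tau> = LI" using assms(1) unfolding end_shaped_def by auto
    moreover have "end_word k \<sigma> s p \<tau> = LI" using \<open>\<not> p < k\<close> ring_size range_ge_2 unfolding end_word_def by auto
    ultimately show False using ne by simp
  qed
  have e0: "end_word k \<sigma> s 0 \<sigma> = end_letter" "end_word k \<sigma> s (k - 1) \<sigma> = end_letter" unfolding end_word_def end_letter_def by simp_all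
  have f0: "f 0 \<sigma> = end_letter" "f (k - 1) \<sigma> = end_letter" using assms(1) unfolding end_shaped_def by simp_all
  have nend: "(p, \<tau>) \<noteq> (0, \<sigma>) \<and> (p, \<tau>) \<noteq> (k - 1, \<sigma>)"
  proof
    show "(p, \<tau>) \<noteq> (0, \<sigma>)"
    proof
      assume "(p, \<tau>) = (0, \<sigma>)"
      then show False using ne e0 f0 by simp
    qed
    show "(p, \<tau>) \<noteq> (k - 1, \<sigma>)"
    proof
      assume "(p, \<tau>) = (k - 1, \<sigma>)"
      then show False using ne e0 f0 by simp
    qed
  qed
  have "end_word k \<sigma> s p \<tau> = LI" using nend unfolding end_word_def by auto
  then have "f p \<tau> = LZ" using ne assms(1) p nend unfolding end_shaped_def by auto
  then have "(LZ, ((a + p) mod L, \<tau>)) \<in> set (basis_word_list L k a f)" using set_basis_word_list p by metis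
  then show ?thesis unfolding z_modes_def by auto
qed

definition free_modes :: "mode set" where
  "free_modes = modes L - {first_mode, last_mode}"

lemma finite_free_modes: "finite free_modes"
  unfolding free_modes_def modes_def by simp

lemma sum_free_configs_term:
  "(\<Sum>X\<in>Pow free_modes. (if end_shaped f then coef k a f * (\<Prod>m\<in>z_modes f. z_value m (pair_source X)) else 0))
   = (if f = end_word k \<sigma> s then coef k a (end_word k \<sigma> s) * of_nat (card (Pow free_modes)) else 0)"
proof (cases "end_shaped f")
  case False
  then have "f \<noteq> end_word k \<sigma> s" using end_shaped_end_word by auto
  then show ?thesis using False by simp
next
  case True
  have "(\<Prod>m\<in>z_modes f. z_value m (pair_source X)) = (\<Prod>m\<in>z_modes f. z_value m X)" for X
  proof (rule prod.cong[OF refl])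
    fix m assume "m \<in> z_modes f"
    then have "m \<noteq> first_mode" "m \<noteq> last_mode" using z_modes_subset[OF True] by auto
    then show "z_value m (pair_source X) = z_value m X" unfolding z_value_def pair_source_def by auto
  qed
  then have "(\<Sum>X\<in>Pow free_modes. (if end_shaped f then coef k a f * (\<Prod>m\<in>z_modes f. z_value m (pair_source X)) else 0))
      = coef k a f * (\<Sum>X\<in>Pow free_modes. \<Prod>m\<in>z_modes f. z_value m X)"
    using True by (simp add: sum_distrib_left)
  also have "\<dots> = (if f = end_word k \<sigma> s then coef k a (end_word k \<sigma> s) * of_nat (card (Pow free_modes)) else 0)"
  proof (cases "f = end_word k \<sigma> s")
    case True
    then show ?thesis using z_modes_end_word by simp
  next
    case False
    have "z_modes f \<subseteq> free_modes"
    proof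
      fix m assume m: "m \<in> z_modes f"
      then have "m \<in> window L k a" "m \<noteq> first_mode" "m \<noteq> last_mode"
        using z_modes_subset[OF \<open>end_shaped f\<close>] by auto
      moreover have "window L k a \<subseteq> modes L" unfolding window_def modes_def using L_pos by auto
      ultimately show "m \<in> free_modes" unfolding free_modes_def by auto
    qed
    then have "(\<Sum>X\<in>Pow free_modes. \<Prod>m\<in>z_modes f. z_value m X) = 0"
      using sum_Pow_prod_z_value[OF finite_free_modes] z_modes_nonempty[OF \<open>end_shaped f\<close> False] by blast
    then show ?thesis using False by simp
  qed
  finally show ?thesis .
qed

lemma end_word_coef_zero:
  assumes "\<And>X. X \<in> configs L \<Longrightarrow> first_mode \<notin> X \<Longrightarrow> last_mode \<notin> X
             \<Longrightarrow> local_op L k coef (pair_target X) (pair_source X) = 0"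
  shows "coef k a (end_word k \<sigma> s) = 0"
proof -
  have "z_weighted_coef X = 0" if "X \<in> Pow free_modes" for X
  proof -
    have X: "X \<in> configs L" "first_mode \<notin> X" "last_mode \<notin> X"
      using that unfolding free_modes_def configs_def by auto
    then have "basis_elem L k a (end_word k \<sigma> s) (pair_target X) (pair_source X) \<noteq> 0"
      using end_word_entry_unit by fastforce
    then show ?thesis using assms[OF X] local_op_pair_entry[OF X] by simp
  qed
  then have "0 = (\<Sum>X\<in>Pow free_modes. z_weighted_coef X)" by simp
  also have "\<dots> = (\<Sum>f\<in>basis_words k. \<Sum>X\<in>Pow free_modes.
                    (if end_shaped f then coef k a f * (\<Prod>m\<in>z_modes f. z_value m (pair_source X)) else 0))"
    unfolding z_weighted_coef_def by (rule sum.swap)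
  also have "\<dots> = coef k a (end_word k \<sigma> s) * of_nat (card (Pow free_modes))"
    unfolding sum_free_configs_term using finite_basis_words end_word_in_basis_words by simp
  finally show ?thesis using finite_free_modes by (simp add: card_Pow)
qed

lemma pair_op_entry:
  "pair_op L k coef s X (insert first_mode (insert last_mode X)) = local_op L k coef (pair_target X) (pair_source X)"
  unfolding pair_op_def pair_target_def pair_source_def by simp

lemma pair_op_window_reduction:
  assumes "X \<in> configs L" "first_mode \<notin> X" "last_mode \<notin> X"
  shows "pair_op L k coef s X (insert first_mode (insert last_mode X)) = 0
     \<longleftrightarrow> pair_op L k coef s (X \<inter> window L k a) (insert first_mode (insert last_mode (X \<inter> window L k a))) = 0"
  unfolding pair_op_entry using local_op_pair_entry_window[OF assms] .

lemma end_word_coef_zero_if_pair_op_vanishes: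
  assumes "\<And>X. X \<in> configs L \<Longrightarrow> first_mode \<notin> X \<Longrightarrow> last_mode \<notin> X
             \<Longrightarrow> pair_op L k coef s X (insert first_mode (insert last_mode X)) = 0"
  shows "coef k a (end_word k \<sigma> s) = 0"
  using end_word_coef_zero assms unfolding pair_op_entry by blast

end

lemma pair_op_window_reduction_mod:
  assumes "2 * k \<le> L" "2 \<le> k"
    and "X \<in> configs L" "(b mod L, \<sigma>) \<notin> X" "((b + (k - 1)) mod L, \<sigma>) \<notin> X"
  shows "pair_op L k coef s X (insert (b mod L, \<sigma>) (insert ((b + (k - 1)) mod L, \<sigma>) X)) = 0
     \<longleftrightarrow> pair_op L k coef s (X \<inter> window L k b)
           (insert (b mod L, \<sigma>) (insert ((b + (k - 1)) mod L, \<sigma>) (X \<inter> window L k b))) = 0"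
proof -
  interpret W: end_pair_word L k coef "b mod L" \<sigma> s
    using assms(1,2) by unfold_locales auto
  show ?thesis
    using W.pair_op_window_reduction[of X] assms(3-5)
    unfolding W.first_mode_def W.last_mode_def by (simp add: mod_add_left_eq window_mod)
qed

theorem lemma9:
  fixes L k :: nat and U :: real
    and coef :: "nat \<Rightarrow> nat \<Rightarrow> (nat \<Rightarrow> bool \<Rightarrow> letter) \<Rightarrow> complex"
  assumes "U \<noteq> 0"
    and "2 \<le> k" and "k < L div 2"
    and "is_k_local_conserved L U k coef"
  shows "\<forall>\<sigma> s. \<forall>i<L. coef k i (end_word k \<sigma> s) = 0"
proof (intro allI impI)
  fix \<sigma> s i assume "i < L"
  have ring: "2 * k + 2 \<le> L" using assms(3) by linarith
  then have "0 < L" "2 * k \<le> L" by linarith+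
  interpret H: hubbard_commutant L k U "pair_op L k coef s" \<sigma>
    using ring assms(2) k_local_pair_op commutes_pair_op[OF assms(4)] \<open>0 < L\<close> by unfold_locales
  interpret W: end_pair_word L k coef i \<sigma> s
    using \<open>2 * k \<le> L\<close> assms(2) \<open>i < L\<close> by unfold_locales
  have "pair_op L k coef s X (insert (i mod L, \<sigma>) (insert ((i + (k - 1)) mod L, \<sigma>) X)) = 0"
    if "X \<in> configs L" "(i mod L, \<sigma>) \<notin> X" "((i + (k - 1)) mod L, \<sigma>) \<notin> X" for X
    using H.pair_amplitude_zero[OF assms(1) pair_op_window_reduction_mod[OF \<open>2 * k \<le> L\<close> assms(2)] that] .
  then show "coef k i (end_word k \<sigma> s) = 0"
    using \<open>i < L\<close> by (intro W.end_word_coef_zero_if_pair_op_vanishes) (simp add: W.first_mode_def W.last_mode_def)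
qed

end
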